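(* Under Assumptions A1–A4, with $F$ linear in $\boldsymbol\lambda$, for every $\boldsymbol\lambda\in\Lambda$, $$\frac1T\sum_{s=0}^{S-1}\sum_{t=s\tau+1}^{(s+1)\tau}\mathbb E\big[F(\boldsymbol w^{(t)},\boldsymbol\lambda)-F(\boldsymbol w^{(t)},\boldsymbol\lambda^{(s)})\big]\le\frac{D_\Lambda^2}{2\gamma T}+\frac{\gamma\tau G_\lambda^2}{2}+\frac{\gamma\tau\sigma_\lambda^2}{2m}.$$
   Context: Setting: $N$ clients, $\mathcal N=\{1,\dots,N\}$. Client $i$ has loss $\ell_i(\boldsymbol w;\zeta)$ and local objective $f_i(\boldsymbol w)=\mathbb E_{\zeta\sim\mathcal P_i}[\ell_i(\boldsymbol w;\zeta)]$, with $\boldsymbol w$ in a closed convex set $\mathcal W\subset\mathbb R^p$. $\Lambda=\{\boldsymbol\lambda\in\mathbb R^N_+:\sum_i\lambda_i=1\}$, $F(\boldsymbol w,\boldsymbol\lambda)=\sum_{i=1}^N\lambda_i f_i(\boldsymbol w)$. DRDM runs $S=T/\tau$ rounds; $\boldsymbol w^{(t)}$ is its virtual global primal iterate at local iteration $t$ and $\boldsymbol\lambda^{(s)}$ its dual iterate in round $s$. Dual update: in round $s$ the server samples $t'$ uniformly from $\{s\tau+1,\dots,(s+1)\tau\}$, samples uniformly a set $\mathcal U$ of $m$ clients, forms $\boldsymbol v\in\mathbb R^N$ with $v_i=\frac Nm\ell_i(\boldsymbol w^{(t')};\zeta_i)$ for $i\in\mathcal U$ and $0$ otherwise, and sets $\boldsymbol\lambda^{(s+1)}=\Pi_\Lambda(\boldsymbol\lambda^{(s)}+\tau\gamma\boldsymbol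 v)$. Assumptions: (A1) $L$-smoothness of $f_i$, $F$; (A2) $\mathbb E\|\nabla f_i(\boldsymbol w)\|\le G_w$, $\mathbb E\|\nabla_{\boldsymbol\lambda}F(\boldsymbol w,\boldsymbol\lambda)\|\le G_\lambda$; (A3) diameters of $\mathcal W,\Lambda$ at most $D_{\mathcal W},D_\Lambda$; (A4) $\mathbb E\|\tilde\nabla F(\boldsymbol w;\boldsymbol\lambda)-\nabla_{\boldsymbol\lambda}F(\boldsymbol w;\boldsymbol\lambda)\|^2\le\sigma_\lambda^2$, where $\tilde\nabla F$ is the $N$-vector with $i$th entry $\ell_i(\boldsymbol w;\xi)$ and zeros elsewhere, and the analogous bound $\sigma_w^2$ for primal stochastic gradients. *)

theory Defs
  imports "HOL-Analysis.Analysis" "HOL-Probability.Probability"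
begin

text \<open>Clients are indexed by a finite type 'n, so N = CARD('n); dual vectors live in real^'n.\<close>

definition Lambda_set :: "(real^'n::finite) set" where
  "Lambda_set = {l. (\<forall>i. 0 \<le> l$i) \<and> (\<Sum>i\<in>UNIV. l$i) = 1}"

definition Fobj :: "('n::finite \<Rightarrow> 'w \<Rightarrow> real) \<Rightarrow> 'w \<Rightarrow> real^'n \<Rightarrow> real" where
  "Fobj f x l = (\<Sum>i\<in>UNIV. l$i * f i x)"

definition gradF_lam :: "('n::finite \<Rightarrow> 'w \<Rightarrow> real) \<Rightarrow> 'w \<Rightarrow> real^'n" where
  "gradF_lam f x = (\<chi> i. f i x)"

definition gradF_joint :: "('n::finite \<Rightarrow> 'w::real_normed_vector \<Rightarrow> real) \<Rightarrow> ('n \<Rightarrow> 'w \<Rightarrow> 'w)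
    \<Rightarrow> 'w \<Rightarrow> real^'n \<Rightarrow> 'w \<times> (real^'n)" where
  "gradF_joint f gf x l = ((\<Sum>i\<in>UNIV. l$i *\<^sub>R gf i x), gradF_lam f x)"

text \<open>single-client stochastic lambda-gradient (client i sampled uniformly, xi ~ P_i),
  scaled by N so that it is unbiased.\<close>
definition tildeGradF :: "('n::finite \<Rightarrow> 'w \<Rightarrow> 'z \<Rightarrow> real) \<Rightarrow> 'n \<Rightarrow> 'w \<Rightarrow> 'z \<Rightarrow> real^'n" where
  "tildeGradF loss i x \<xi> = (\<chi> j. if j = i then real CARD('n) * loss i x \<xi> else 0)"

definition dual_vec :: "nat \<Rightarrow> ('n::finite \<Rightarrow> 'w \<Rightarrow> 'z \<Rightarrow> real) \<Rightarrow> 'n set \<Rightarrow> 'w \<Rightarrow> ('n \<Rightarrow> 'z) \<Rightarrow> real^'n" where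
  "dual_vec m loss U x \<zeta> = (\<chi> i. if i \<in> U then (real CARD('n) / real m) * loss i x (\<zeta> i) else 0)"

definition rv_events :: "'a measure \<Rightarrow> 'b measure \<Rightarrow> ('a \<Rightarrow> 'b) \<Rightarrow> 'a set set" where
  "rv_events M N X = {X -` A \<inter> space M | A. A \<in> sets N}"

text \<open>law of the server's fresh samples in round s: t' uniform on the round's iterations,
  U uniform among m-subsets of clients, zeta_i ~ P_i, all independent.\<close>
definition sample_law :: "('n::finite \<Rightarrow> 'z measure) \<Rightarrow> nat \<Rightarrow> nat \<Rightarrow> nat
    \<Rightarrow> (nat \<times> 'n set \<times> ('n \<Rightarrow> 'z)) measure" where
  "sample_law P \<tau> m s =
     measure_pmf (pmf_of_set {s*\<tau>+1..(s+1)*\<tau>}) \<Otimes>\<^sub>M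
       (measure_pmf (pmf_of_set {A. card A = m}) \<Otimes>\<^sub>M PiM UNIV P)"

definition dual_sample :: "(nat \<Rightarrow> 'a \<Rightarrow> nat) \<Rightarrow> (nat \<Rightarrow> 'a \<Rightarrow> 'n set) \<Rightarrow> (nat \<Rightarrow> 'n \<Rightarrow> 'a \<Rightarrow> 'z)
    \<Rightarrow> nat \<Rightarrow> 'a \<Rightarrow> nat \<times> 'n set \<times> ('n \<Rightarrow> 'z)" where
  "dual_sample tp U \<zeta> s \<omega> = (tp s \<omega>, U s \<omega>, (\<lambda>i. \<zeta> s i \<omega>))"

text \<open>events of the history before the dual sampling of round s: primal iterates
  up to iteration (s+1)tau, dual iterates up to round s, dual samples of earlier rounds.\<close>
definition history_events :: "'a measure \<Rightarrow> ('n::finite \<Rightarrow> 'z measure) \<Rightarrow> nat \<Rightarrow> nat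
    \<Rightarrow> (nat \<Rightarrow> 'a \<Rightarrow> 'w::topological_space) \<Rightarrow> (nat \<Rightarrow> 'a \<Rightarrow> real^'n)
    \<Rightarrow> (nat \<Rightarrow> 'a \<Rightarrow> nat) \<Rightarrow> (nat \<Rightarrow> 'a \<Rightarrow> 'n set) \<Rightarrow> (nat \<Rightarrow> 'n \<Rightarrow> 'a \<Rightarrow> 'z)
    \<Rightarrow> nat \<Rightarrow> 'a set set" where
  "history_events M P \<tau> m w lam tp U \<zeta> s =
     (\<Union>t\<in>{..(s+1)*\<tau>}. rv_events M borel (w t))
     \<union> (\<Union>r\<in>{..s}. rv_events M borel (lam r))
     \<union> (\<Union>r\<in>{..<s}. rv_events M (sample_law P \<tau> m r) (dual_sample tp U \<zeta> r))"

end

theory Submission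
  imports Defs
begin

(* The dual update is projected stochastic gradient ascent on the linear map lambda |-> F(w, lambda).
   Projection onto the simplex does not increase the distance to a fixed l in Lambda, so with
   a = tau * gamma and v the dual stochastic vector of round s
     |lam(s+1) - l|^2 <= |lam(s) - l|^2 + 2 a <v, lam(s) - l> + a^2 |v|^2.
   The fresh sample (t', U, zeta) of round s is independent of the history, t' is uniform on the
   round and each client lies in U with probability m/N, which the factor N/m in v compensates.
   Hence E <v, lam(s) - l> = (1/tau) sum_t E [F(w(t), lam(s)) - F(w(t), l)], while (A2) and (A4)
   give E |v|^2 <= (sigma^2 + G^2)/m. Summing over the rounds telescopes, and (A3) bounds the
   initial distance by D. *)

lemma power2_norm_vec_eq_sum: "(norm (v :: real^'n::finite))\<^sup>2 = (\<Sum>i\<in>UNIV. (v$i)\<^sup>2)"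
  unfolding power2_norm_eq_inner inner_vec_def by (simp add: power2_eq_square)

lemma power2_norm_add_scaleR:
  fixes u v :: "'a::real_inner"
  shows "(norm (u + a *\<^sub>R v))\<^sup>2 = (norm u)\<^sup>2 + 2 * a * inner v u + a\<^sup>2 * (norm v)\<^sup>2"
  unfolding power2_norm_eq_inner
  by (simp add: inner_add_left inner_add_right inner_commute power2_eq_square algebra_simps)

lemma dist_closest_point_le:
  fixes S :: "'a::euclidean_space set"
  assumes "convex S" "closed S" "l \<in> S"
  shows "dist (closest_point S y) l \<le> dist y l"
  by (metis assms closest_point_lipschitz closest_point_self empty_iff)

text \<open>No integrability is needed: a non-integrable function has integral 0.\<close>

lemma (in prob_space) integral_le_const_nonneg:
  fixes f :: "'a \<Rightarrow> real"
  assumes "0 \<le> B" "\<And>x. x \<in> space M \<Longrightarrow> f x \<le> B"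
  shows "(\<integral>x. f x \<partial>M) \<le> B"
proof (cases "integrable M f")
  case True
  then show ?thesis using assms by (intro integral_le_const AE_I2) auto
next
  case False
  then show ?thesis using assms by (simp add: not_integrable_integral_eq)
qed

lemma nn_integral_abs_le_integral:
  fixes g \<phi> :: "'a \<Rightarrow> real"
  assumes "integrable M \<phi>" "\<And>y. y \<in> space M \<Longrightarrow> \<bar>g y\<bar> \<le> \<phi> y"
  shows "(\<integral>\<^sup>+y. ennreal \<bar>g y\<bar> \<partial>M) \<le> ennreal (\<integral>y. \<phi> y \<partial>M)"
proof -
  have "(\<integral>\<^sup>+y. ennreal \<bar>g y\<bar> \<partial>M) \<le> (\<integral>\<^sup>+y. ennreal (\<phi> y) \<partial>M)"
    by (intro nn_integral_mono ennreal_leI) (use assms in auto)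
  also have "\<dots> = ennreal (\<integral>y. \<phi> y \<partial>M)"
    by (rule nn_integral_eq_integral) (use assms in \<open>auto intro!: AE_I2 order.trans[OF abs_ge_zero]\<close>)
  finally show ?thesis .
qed

lemma (in prob_space) pair_measure_distr_eq_distr_Pair:
  assumes X: "X \<in> measurable M MX" and Y: "Y \<in> measurable M MY" and law: "distr M MY Y = MY"
    and indep: "\<And>A B. A \<in> sets MX \<Longrightarrow> B \<in> sets MY \<Longrightarrow>
      prob ((X -` A \<inter> space M) \<inter> (Y -` B \<inter> space M)) = prob (X -` A \<inter> space M) * prob (Y -` B \<inter> space M)"
  shows "distr M MX X \<Otimes>\<^sub>M MY = distr M (MX \<Otimes>\<^sub>M MY) (\<lambda>\<omega>. (X \<omega>, Y \<omega>))"
proof (rule pair_measure_eqI)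
  let ?XY = "\<lambda>\<omega>. (X \<omega>, Y \<omega>)"
  have XY: "?XY \<in> measurable M (MX \<Otimes>\<^sub>M MY)" using X Y by measurable
  show "sigma_finite_measure (distr M MX X)"
    using prob_space_distr[OF X] by (simp add: prob_space_imp_sigma_finite)
  show "sigma_finite_measure MY"
    using prob_space_distr[OF Y] law by (simp add: prob_space_imp_sigma_finite)
  fix A B assume A: "A \<in> sets (distr M MX X)" and B: "B \<in> sets MY"
  have "?XY -` (A \<times> B) \<inter> space M = (X -` A \<inter> space M) \<inter> (Y -` B \<inter> space M)"
    by auto
  then have "emeasure (distr M (MX \<Otimes>\<^sub>M MY) ?XY) (A \<times> B)
      = emeasure M (X -` A \<inter> space M) * emeasure M (Y -` B \<inter> space M)"
    using A B X Y indep[of A B]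
    by (simp add: emeasure_distr[OF XY] emeasure_eq_measure ennreal_mult measurable_sets)
  also have "\<dots> = emeasure (distr M MX X) A * emeasure MY B"
    using A B X Y law by (metis emeasure_distr sets_distr)
  finally show "emeasure (distr M MX X) A * emeasure MY B = emeasure (distr M (MX \<Otimes>\<^sub>M MY) ?XY) (A \<times> B)"
    by simp
qed simp

lemma (in prob_space) integral_indep_pair:
  fixes g :: "'x \<Rightarrow> 'y \<Rightarrow> real"
  assumes X: "X \<in> measurable M MX" and Y: "Y \<in> measurable M MY" and law: "distr M MY Y = MY"
    and indep: "\<And>A B. A \<in> sets MX \<Longrightarrow> B \<in> sets MY \<Longrightarrow>
      prob ((X -` A \<inter> space M) \<inter> (Y -` B \<inter> space M)) = prob (X -` A \<inter> space M) * prob (Y -` B \<inter> space M)"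
    and g: "(\<lambda>(x, y). g x y) \<in> borel_measurable (MX \<Otimes>\<^sub>M MY)"
    and bound: "\<And>x. x \<in> space MX \<Longrightarrow> (\<integral>\<^sup>+y. ennreal \<bar>g x y\<bar> \<partial>MY) \<le> ennreal B"
  shows "integrable M (\<lambda>\<omega>. g (X \<omega>) (Y \<omega>))"
    and "(\<integral>\<omega>. g (X \<omega>) (Y \<omega>) \<partial>M) = (\<integral>\<omega>. (\<integral>y. g (X \<omega>) y \<partial>MY) \<partial>M)"
proof -
  let ?XY = "\<lambda>\<omega>. (X \<omega>, Y \<omega>)" and ?PX = "distr M MX X"
  have XY: "?XY \<in> measurable M (MX \<Otimes>\<^sub>M MY)" using X Y by measurable
  interpret PX: prob_space ?PX by (rule prob_space_distr[OF X])
  interpret PY: prob_space MY by (metis law prob_space_distr[OF Y])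
  interpret PP: pair_prob_space ?PX MY ..
  have joint_law: "?PX \<Otimes>\<^sub>M MY = distr M (MX \<Otimes>\<^sub>M MY) ?XY"
    by (rule pair_measure_distr_eq_distr_Pair[OF X Y law indep])
  have "sets (?PX \<Otimes>\<^sub>M MY) = sets (MX \<Otimes>\<^sub>M MY)"
    by (intro sets_pair_measure_cong) auto
  then have g': "case_prod g \<in> borel_measurable (?PX \<Otimes>\<^sub>M MY)"
    using g measurable_cong_sets by blast
  have "(\<integral>\<^sup>+z. ennreal (norm (case_prod g z)) \<partial>(?PX \<Otimes>\<^sub>M MY))
      = (\<integral>\<^sup>+x. (\<integral>\<^sup>+y. ennreal \<bar>g x y\<bar> \<partial>MY) \<partial>?PX)"
    by (subst PY.nn_integral_fst[symmetric]) (use g' in auto)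
  also have "\<dots> \<le> (\<integral>\<^sup>+x. ennreal B \<partial>?PX)"
    by (intro nn_integral_mono) (use bound in auto)
  also have "\<dots> < \<infinity>" using PX.emeasure_space_1 by simp
  finally have int: "integrable (?PX \<Otimes>\<^sub>M MY) (case_prod g)"
    using g' by (simp add: integrable_iff_bounded)
  then show "integrable M (\<lambda>\<omega>. g (X \<omega>) (Y \<omega>))"
    unfolding joint_law by (subst (asm) integrable_distr_eq[OF XY g]) simp
  have inner: "(\<lambda>x. \<integral>y. g x y \<partial>MY) \<in> borel_measurable MX"
    using g by (rule PY.borel_measurable_lebesgue_integral)
  have "(\<integral>\<omega>. g (X \<omega>) (Y \<omega>) \<partial>M) = integral\<^sup>L (distr M (MX \<Otimes>\<^sub>M MY) ?XY) (case_prod g)"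
    by (simp add: integral_distr[OF XY g])
  also have "\<dots> = (\<integral>x. (\<integral>y. g x y \<partial>MY) \<partial>?PX)"
    unfolding joint_law[symmetric] by (simp add: PP.integral_fst'[OF int, symmetric])
  also have "\<dots> = (\<integral>\<omega>. (\<integral>y. g (X \<omega>) y \<partial>MY) \<partial>M)"
    by (rule integral_distr[OF X inner])
  finally show "(\<integral>\<omega>. g (X \<omega>) (Y \<omega>) \<partial>M) = (\<integral>\<omega>. (\<integral>y. g (X \<omega>) y \<partial>MY) \<partial>M)" .
qed

lemma integral_measure_pmf_pair:
  fixes g :: "'a \<times> 'b \<Rightarrow> real"
  assumes N: "prob_space N" and fin: "finite (set_pmf p)"
    and g: "g \<in> borel_measurable (measure_pmf p \<Otimes>\<^sub>M N)"
    and int: "\<And>a. a \<in> set_pmf p \<Longrightarrow> integrable N (\<lambda>y. g (a, y))"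
  shows "integrable (measure_pmf p \<Otimes>\<^sub>M N) g"
    and "(\<integral>z. g z \<partial>(measure_pmf p \<Otimes>\<^sub>M N)) = (\<Sum>a\<in>set_pmf p. pmf p a * (\<integral>y. g (a, y) \<partial>N))"
proof -
  interpret N: prob_space N by fact
  interpret PP: pair_sigma_finite "measure_pmf p" N ..
  have "(\<integral>\<^sup>+z. ennreal (norm (g z)) \<partial>(measure_pmf p \<Otimes>\<^sub>M N))
      = (\<integral>\<^sup>+x. (\<integral>\<^sup>+y. ennreal (norm (g (x, y))) \<partial>N) \<partial>measure_pmf p)"
    by (rule N.nn_integral_fst[symmetric]) (use g in measurable)
  also have "\<dots> = (\<Sum>a\<in>set_pmf p. (\<integral>\<^sup>+y. ennreal (norm (g (a, y))) \<partial>N) * ennreal (pmf p a))"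
    by (rule nn_integral_measure_pmf_finite[OF fin]) auto
  also have "\<dots> < \<infinity>"
    using int by (auto simp: ennreal_sum_less_top ennreal_mult_less_top fin integrable_iff_bounded)
  finally show gi: "integrable (measure_pmf p \<Otimes>\<^sub>M N) g"
    using g by (simp add: integrable_iff_bounded)
  have "(\<integral>z. g z \<partial>(measure_pmf p \<Otimes>\<^sub>M N)) = (\<integral>x. (\<integral>y. g (x, y) \<partial>N) \<partial>measure_pmf p)"
    by (rule PP.integral_fst'[OF gi, symmetric])
  also have "\<dots> = (\<Sum>a\<in>set_pmf p. (\<integral>y. g (a, y) \<partial>N) * pmf p a)"
    by (rule integral_measure_pmf_real[OF fin]) auto
  finally show "(\<integral>z. g z \<partial>(measure_pmf p \<Otimes>\<^sub>M N)) = (\<Sum>a\<in>set_pmf p. pmf p a * (\<integral>y. g (a, y) \<partial>N))"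
    by (simp add: mult.commute)
qed

lemma integral_PiM_component:
  fixes h :: "'z \<Rightarrow> real"
  assumes P: "\<And>i. i \<in> I \<Longrightarrow> prob_space (P i)" and i: "i \<in> I" and h: "integrable (P i) h"
  shows "integrable (PiM I P) (\<lambda>z. h (z i))" and "(\<integral>z. h (z i) \<partial>PiM I P) = (\<integral>\<xi>. h \<xi> \<partial>P i)"
proof -
  have law: "distr (PiM I P) (P i) (\<lambda>z. z i) = P i" by (rule distr_PiM_component[OF P i])
  have comp: "(\<lambda>z. z i) \<in> measurable (PiM I P) (P i)" by (rule measurable_component_singleton[OF i])
  have hm: "h \<in> borel_measurable (P i)" using h by auto
  show "integrable (PiM I P) (\<lambda>z. h (z i))"
    using h integrable_distr_eq[OF comp hm] by (simp add: law)
  show "(\<integral>z. h (z i) \<partial>PiM I P) = (\<integral>\<xi>. h \<xi> \<partial>P i)"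
    using integral_distr[OF comp hm] by (simp add: law)
qed

lemma Lambda_closed: "closed (Lambda_set :: (real^'n::finite) set)"
  unfolding Lambda_set_def
  by (intro closed_Collect_conj closed_Collect_all closed_Collect_le closed_Collect_eq continuous_intros)

lemma Lambda_convex: "convex (Lambda_set :: (real^'n::finite) set)"
  unfolding convex_def Lambda_set_def
  by (auto simp: sum.distrib sum_distrib_left[symmetric])

lemma Lambda_nth_bounds:
  assumes "l \<in> Lambda_set"
  shows "0 \<le> l$i" and "l$i \<le> 1"
proof -
  have "\<forall>j. 0 \<le> l$j" "(\<Sum>j\<in>UNIV. l$j) = 1" using assms by (auto simp: Lambda_set_def)
  moreover from this have "l$i \<le> (\<Sum>j\<in>UNIV. l$j)" by (intro member_le_sum) auto
  ultimately show "0 \<le> l$i" "l$i \<le> 1" by simp_all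
qed

lemma Lambda_abs_nth_diff_le: "l \<in> Lambda_set \<Longrightarrow> k \<in> Lambda_set \<Longrightarrow> \<bar>(l - k)$i\<bar> \<le> 1"
  using Lambda_nth_bounds[of l i] Lambda_nth_bounds[of k i] by auto

lemma Lambda_power2_norm_diff_le:
  assumes l: "l \<in> Lambda_set" and k: "k \<in> Lambda_set"
  shows "(norm (l - k))\<^sup>2 \<le> 2"
proof -
  have "((l - k)$i)\<^sup>2 \<le> l$i + k$i" for i
  proof -
    have "((l - k)$i)\<^sup>2 \<le> \<bar>(l - k)$i\<bar>"
      using Lambda_abs_nth_diff_le[OF l k, of i]
      by (metis abs_ge_zero abs_le_square_iff abs_of_nonneg mult_left_le power2_eq_square power2_abs)
    also have "\<dots> \<le> l$i + k$i" using Lambda_nth_bounds[OF l, of i] Lambda_nth_bounds[OF k, of i] by auto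
    finally show ?thesis .
  qed
  then have "(\<Sum>i\<in>UNIV. ((l - k)$i)\<^sup>2) \<le> (\<Sum>i\<in>UNIV. l$i) + (\<Sum>i\<in>UNIV. k$i)"
    by (simp add: sum.distrib[symmetric] sum_mono)
  then show ?thesis using l k by (simp add: power2_norm_vec_eq_sum Lambda_set_def)
qed

lemma card_subsets_containing:
  fixes i :: "'n::finite"
  shows "card {A::'n set. card A = m \<and> i \<in> A} * CARD('n) = m * card {A::'n set. card A = m}"
proof (cases "m = 0")
  case True
  then have "{A::'n set. card A = m \<and> i \<in> A} = {}" by auto
  then show ?thesis using True by simp
next
  case False
  have bij: "bij_betw (insert i) {B. B \<subseteq> UNIV - {i} \<and> card B = m - 1} {A::'n set. card A = m \<and> i \<in> A}"
  proof (rule bij_betw_imageI)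
    show "inj_on (insert i) {B. B \<subseteq> UNIV - {i} \<and> card B = m - 1}"
      by (rule inj_onI) blast
    show "insert i ` {B. B \<subseteq> UNIV - {i} \<and> card B = m - 1} = {A::'n set. card A = m \<and> i \<in> A}"
    proof safe
      fix B :: "'n set" assume "B \<subseteq> UNIV - {i}" "card B = m - 1"
      then show "card (insert i B) = m" using False by (subst card_insert_disjoint) auto
    next
      fix A :: "'n set" assume "i \<in> A" "m = card A"
      then show "A \<in> insert i ` {B. B \<subseteq> UNIV - {i} \<and> card B = card A - 1}"
        by (intro image_eqI[of _ _ "A - {i}"]) auto
    qed
  qed
  have "card {A::'n set. card A = m \<and> i \<in> A} = (CARD('n) - 1) choose (m - 1)"
    using bij_betw_same_card[OF bij] n_subsets[of "UNIV - {i}" "m - 1"] by simp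
  moreover have "card {A::'n set. card A = m} = CARD('n) choose m"
    using n_subsets[of "UNIV::'n set" m] by simp
  moreover have "m * (CARD('n) choose m) = CARD('n) * ((CARD('n) - 1) choose (m - 1))"
    using binomial_absorption[of "m - 1" "CARD('n)"] False by simp
  ultimately show ?thesis by (simp add: mult.commute)
qed

lemma card_subsets_pos: "m \<le> CARD('n::finite) \<Longrightarrow> 0 < card {A::'n set. card A = m}"
  using n_subsets[of "UNIV::'n set" m] by simp

definition sampled_clients_sum ::
    "nat \<Rightarrow> ('n::finite \<Rightarrow> 'z \<Rightarrow> real) \<Rightarrow> nat \<times> 'n set \<times> ('n \<Rightarrow> 'z) \<Rightarrow> real" where
  "sampled_clients_sum t h y =
     (if fst y = t then \<Sum>i\<in>UNIV. if i \<in> fst (snd y) then h i (snd (snd y) i) else 0 else 0)"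

lemma integral_sample_law:
  fixes P :: "'n::finite \<Rightarrow> 'z measure" and g :: "nat \<times> 'n set \<times> ('n \<Rightarrow> 'z) \<Rightarrow> real"
  assumes P: "\<And>i. prob_space (P i)" and \<tau>: "1 \<le> \<tau>" and m: "m \<le> CARD('n)"
    and g: "g \<in> borel_measurable (sample_law P \<tau> m s)"
    and g_int: "\<And>t A. t \<in> {s*\<tau>+1..(s+1)*\<tau>} \<Longrightarrow> card A = m \<Longrightarrow> integrable (PiM UNIV P) (\<lambda>z. g (t, A, z))"
  shows "integrable (sample_law P \<tau> m s) g"
    and "(\<integral>y. g y \<partial>sample_law P \<tau> m s) =
      (\<Sum>t\<in>{s*\<tau>+1..(s+1)*\<tau>}. \<Sum>A\<in>{A. card A = m}. \<integral>z. g (t, A, z) \<partial>PiM UNIV P)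
        / (real \<tau> * real (card {A::'n set. card A = m}))"
proof -
  let ?R = "{s*\<tau>+1..(s+1)*\<tau>}" and ?C = "{A::'n set. card A = m}"
  let ?Q = "measure_pmf (pmf_of_set ?C) \<Otimes>\<^sub>M PiM UNIV P"
  interpret PI: prob_space "PiM UNIV P" by (intro prob_space_PiM P)
  have R: "finite ?R" "?R \<noteq> {}" "card ?R = \<tau>" using \<tau> by auto
  have C: "finite ?C" "?C \<noteq> {}" using card_subsets_pos[OF m] by (auto simp: card_gt_0_iff)
  have Q: "prob_space ?Q" by (intro prob_space_pair prob_space_measure_pmf PI.prob_space_axioms)
  have g_sect: "(\<lambda>r. g (t, r)) \<in> borel_measurable ?Q" for t
    using g unfolding sample_law_def by measurable
  have inner: "integrable ?Q (\<lambda>r. g (t, r)) \<and>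
      (\<integral>r. g (t, r) \<partial>?Q) = (\<Sum>A\<in>?C. \<integral>z. g (t, A, z) \<partial>PiM UNIV P) / real (card ?C)"
    if "t \<in> ?R" for t
    using integral_measure_pmf_pair[OF PI.prob_space_axioms _ g_sect[of t]] C g_int that
    by (auto simp: sum_divide_distrib)
  have g': "g \<in> borel_measurable (measure_pmf (pmf_of_set ?R) \<Otimes>\<^sub>M ?Q)"
    using g unfolding sample_law_def .
  show "integrable (sample_law P \<tau> m s) g"
    unfolding sample_law_def using integral_measure_pmf_pair(1)[OF Q _ g'] R inner by auto
  have "(\<integral>y. g y \<partial>sample_law P \<tau> m s) = (\<Sum>t\<in>?R. (\<integral>r. g (t, r) \<partial>?Q) / real \<tau>)"
    unfolding sample_law_def using integral_measure_pmf_pair(2)[OF Q _ g'] R inner by (simp add: mult_ac)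
  also have "\<dots> = (\<Sum>t\<in>?R. \<Sum>A\<in>?C. \<integral>z. g (t, A, z) \<partial>PiM UNIV P) / (real \<tau> * real (card ?C))"
    using inner by (auto simp: sum_divide_distrib divide_divide_eq_left mult_ac intro!: sum.cong)
  finally show "(\<integral>y. g y \<partial>sample_law P \<tau> m s) =
      (\<Sum>t\<in>?R. \<Sum>A\<in>?C. \<integral>z. g (t, A, z) \<partial>PiM UNIV P) / (real \<tau> * real (card ?C))" .
qed

lemma integral_PiM_sampled_clients_sum:
  fixes P :: "'n::finite \<Rightarrow> 'z measure" and h :: "'n \<Rightarrow> 'z \<Rightarrow> real"
  assumes P: "\<And>i. prob_space (P i)" and h: "\<And>i. integrable (P i) (h i)"
  shows "integrable (PiM UNIV P) (\<lambda>z. sampled_clients_sum t h (t', A, z))"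
    and "(\<integral>z. sampled_clients_sum t h (t', A, z) \<partial>PiM UNIV P)
      = (if t' = t then \<Sum>i\<in>UNIV. if i \<in> A then \<integral>\<xi>. h i \<xi> \<partial>P i else 0 else 0)"
proof -
  have comp: "integrable (PiM UNIV P) (\<lambda>z. h i (z i))"
    "(\<integral>z. h i (z i) \<partial>PiM UNIV P) = (\<integral>\<xi>. h i \<xi> \<partial>P i)" for i
    using integral_PiM_component[of UNIV P i "h i"] P h by auto
  have client_int: "integrable (PiM UNIV P) (\<lambda>z. if i \<in> A then h i (z i) else 0)" for i
    by (cases "i \<in> A") (simp_all add: comp)
  have client_integral: "(\<integral>z. (if i \<in> A then h i (z i) else 0) \<partial>PiM UNIV P)
      = (if i \<in> A then \<integral>\<xi>. h i \<xi> \<partial>P i else 0)" for i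
    by (cases "i \<in> A") (simp_all add: comp)
  show "integrable (PiM UNIV P) (\<lambda>z. sampled_clients_sum t h (t', A, z))"
    unfolding sampled_clients_sum_def fst_conv snd_conv
    by (cases "t' = t") (auto intro!: Bochner_Integration.integrable_sum client_int)
  show "(\<integral>z. sampled_clients_sum t h (t', A, z) \<partial>PiM UNIV P)
      = (if t' = t then \<Sum>i\<in>UNIV. if i \<in> A then \<integral>\<xi>. h i \<xi> \<partial>P i else 0 else 0)"
    unfolding sampled_clients_sum_def fst_conv snd_conv
    by (cases "t' = t") (simp_all add: Bochner_Integration.integral_sum client_int client_integral)
qed

text \<open>The factor m/(N tau): the sampled iteration equals t with probability 1/tau, and each
  client lies in the uniformly sampled m-subset with probability m/N.\<close>

lemma integral_sample_law_sampled_clients_sum: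
  fixes P :: "'n::finite \<Rightarrow> 'z measure" and h :: "'n \<Rightarrow> 'z \<Rightarrow> real"
  assumes P: "\<And>i. prob_space (P i)" and m: "m \<le> CARD('n)"
    and h: "\<And>i. integrable (P i) (h i)" and t: "t \<in> {s*\<tau>+1..(s+1)*\<tau>}"
  shows "integrable (sample_law P \<tau> m s) (sampled_clients_sum t h)"
    and "(\<integral>y. sampled_clients_sum t h y \<partial>sample_law P \<tau> m s)
      = real m / (real CARD('n) * real \<tau>) * (\<Sum>i\<in>UNIV. \<integral>\<xi>. h i \<xi> \<partial>P i)"
proof -
  let ?R = "{s*\<tau>+1..(s+1)*\<tau>}" and ?C = "{A::'n set. card A = m}"
  let ?E = "\<lambda>i. \<integral>\<xi>. h i \<xi> \<partial>P i"
  note sect = integral_PiM_sampled_clients_sum[OF P h, where t=t]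
  have \<tau>: "1 \<le> \<tau>" using t by (cases \<tau>) auto
  have [measurable]: "h i \<in> borel_measurable (P i)" for i using h by auto
  have g: "sampled_clients_sum t h \<in> borel_measurable (sample_law P \<tau> m s)"
    unfolding sample_law_def sampled_clients_sum_def by measurable
  have "real (card {A::'n set. card A = m \<and> i \<in> A}) * real CARD('n) = real m * real (card ?C)" for i
    by (metis card_subsets_containing of_nat_mult)
  then have card_containing:
    "real (card {A::'n set. card A = m \<and> i \<in> A}) = real m * real (card ?C) / real CARD('n)" for i
    by (simp add: eq_divide_eq)
  have C: "real (card ?C) \<noteq> 0" using card_subsets_pos[OF m] by (metis of_nat_0_less_iff less_irrefl)
  have cancel: "a * k / N * x / (T * k) = a / (N * T) * x" if "k \<noteq> 0" for a k N T x :: real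
    using that by simp
  show "integrable (sample_law P \<tau> m s) (sampled_clients_sum t h)"
    by (rule integral_sample_law(1)[OF P \<tau> m g sect(1)])
  have "(\<integral>y. sampled_clients_sum t h y \<partial>sample_law P \<tau> m s)
      = (\<Sum>t'\<in>?R. \<Sum>A\<in>?C. if t' = t then \<Sum>i\<in>UNIV. if i \<in> A then ?E i else 0 else 0)
          / (real \<tau> * real (card ?C))"
    by (simp only: integral_sample_law(2)[OF P \<tau> m g sect(1)] sect(2))
  also have "(\<Sum>t'\<in>?R. \<Sum>A\<in>?C. if t' = t then \<Sum>i\<in>UNIV. if i \<in> A then ?E i else 0 else 0)
      = (\<Sum>A\<in>?C. \<Sum>i\<in>UNIV. if i \<in> A then ?E i else 0)"
    using t by (subst sum.swap) simp
  also have "\<dots> = (\<Sum>i\<in>UNIV. \<Sum>A\<in>?C. if i \<in> A then ?E i else 0)"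
    by (rule sum.swap)
  also have "\<dots> = (\<Sum>i\<in>UNIV. real (card {A::'n set. card A = m \<and> i \<in> A}) * ?E i)"
    by (simp add: sum.If_cases Int_def)
  also have "\<dots> = (\<Sum>i\<in>UNIV. real m * real (card ?C) / real CARD('n) * ?E i)"
    by (simp only: card_containing)
  also have "\<dots> = real m * real (card ?C) / real CARD('n) * (\<Sum>i\<in>UNIV. ?E i)"
    by (rule sum_distrib_left[symmetric])
  finally show "(\<integral>y. sampled_clients_sum t h y \<partial>sample_law P \<tau> m s)
      = real m / (real CARD('n) * real \<tau>) * (\<Sum>i\<in>UNIV. ?E i)"
    by (simp only: cancel[OF C])
qed

lemma power2_norm_tildeGradF_diff:
  fixes loss :: "'n::finite \<Rightarrow> 'w \<Rightarrow> 'z \<Rightarrow> real"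
  shows "(norm (tildeGradF loss i x \<xi> - gradF_lam f x))\<^sup>2
     = (real CARD('n))\<^sup>2 * (loss i x \<xi>)\<^sup>2 - 2 * real CARD('n) * f i x * loss i x \<xi>
       + (norm (gradF_lam f x))\<^sup>2"
proof -
  let ?N = "real CARD('n)"
  have "(norm (tildeGradF loss i x \<xi> - gradF_lam f x))\<^sup>2
      = (\<Sum>j\<in>UNIV. ((if j = i then ?N * loss i x \<xi> else 0) - f j x)\<^sup>2)"
    by (simp add: power2_norm_vec_eq_sum tildeGradF_def gradF_lam_def)
  also have "\<dots> = (\<Sum>j\<in>UNIV. (f j x)\<^sup>2
      + (if j = i then ?N\<^sup>2 * (loss i x \<xi>)\<^sup>2 - 2 * ?N * f i x * loss i x \<xi> else 0))"
    by (intro sum.cong) (auto simp: power2_eq_square algebra_simps)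
  finally have "(norm (tildeGradF loss i x \<xi> - gradF_lam f x))\<^sup>2 = \<dots>" .
  then show ?thesis by (simp add: sum.distrib power2_norm_vec_eq_sum gradF_lam_def)
qed

lemma power2_nth_le_power2_norm_gradF_lam: "(f i x)\<^sup>2 \<le> (norm (gradF_lam f x))\<^sup>2"
  unfolding power2_norm_vec_eq_sum gradF_lam_def by (simp, rule member_le_sum) auto

lemma power2_le_twice_diff: "(a::real)\<^sup>2 \<le> 2 * (a - b)\<^sup>2 + 2 * b\<^sup>2"
proof -
  have "0 \<le> (a - 2 * b)\<^sup>2" by simp
  then show ?thesis by (simp add: power2_eq_square algebra_simps)
qed

lemma power2_loss_le_tildeGradF:
  fixes loss :: "'n::finite \<Rightarrow> 'w \<Rightarrow> 'z \<Rightarrow> real"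
  shows "(loss i x \<xi>)\<^sup>2 \<le> 2 / (real CARD('n))\<^sup>2 *
    ((norm (tildeGradF loss i x \<xi> - gradF_lam f x))\<^sup>2 + (f i x)\<^sup>2)"
proof -
  let ?N = "real CARD('n)" and ?Q = "(norm (tildeGradF loss i x \<xi> - gradF_lam f x))\<^sup>2"
  have "?Q = (?N * loss i x \<xi> - f i x)\<^sup>2 + ((norm (gradF_lam f x))\<^sup>2 - (f i x)\<^sup>2)"
    unfolding power2_norm_tildeGradF_diff by (simp add: power2_eq_square algebra_simps)
  then have "(?N * loss i x \<xi> - f i x)\<^sup>2 \<le> ?Q"
    using power2_nth_le_power2_norm_gradF_lam[of f i x] by linarith
  then have "?N\<^sup>2 * (loss i x \<xi>)\<^sup>2 \<le> 2 * (?Q + (f i x)\<^sup>2)"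
    using power2_le_twice_diff[of "?N * loss i x \<xi>" "f i x"] by (simp add: power_mult_distrib)
  then show ?thesis by (simp add: field_simps)
qed

lemma integrable_sum_nn_integral_le:
  fixes g :: "'i \<Rightarrow> 'a \<Rightarrow> real"
  assumes I: "finite I" and meas: "\<And>i. i \<in> I \<Longrightarrow> g i \<in> borel_measurable (N i)"
    and nonneg: "\<And>i \<xi>. 0 \<le> g i \<xi>" and c: "0 \<le> c"
    and le: "(\<Sum>i\<in>I. \<integral>\<^sup>+\<xi>. ennreal (g i \<xi>) \<partial>N i) \<le> ennreal c"
  shows "i \<in> I \<Longrightarrow> integrable (N i) (g i)"
    and "(\<Sum>i\<in>I. \<integral>\<xi>. g i \<xi> \<partial>N i) \<le> c"
proof -
  have "(\<integral>\<^sup>+\<xi>. ennreal (g i \<xi>) \<partial>N i) < \<infinity>" if "i \<in> I" for i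
  proof -
    have "(\<integral>\<^sup>+\<xi>. ennreal (g i \<xi>) \<partial>N i) \<le> ennreal c"
      using member_le_sum[of i I "\<lambda>i. \<integral>\<^sup>+\<xi>. ennreal (g i \<xi>) \<partial>N i"] I le that by auto
    then show ?thesis by (metis ennreal_less_top infinity_ennreal_def le_less_trans)
  qed
  moreover have "(\<integral>\<^sup>+\<xi>. ennreal (norm (g i \<xi>)) \<partial>N i) = (\<integral>\<^sup>+\<xi>. ennreal (g i \<xi>) \<partial>N i)" for i
    using nonneg by simp
  ultimately show int: "integrable (N i) (g i)" if "i \<in> I" for i
    using that by (intro integrableI_bounded meas) auto
  have "ennreal (\<Sum>i\<in>I. \<integral>\<xi>. g i \<xi> \<partial>N i) = (\<Sum>i\<in>I. ennreal (\<integral>\<xi>. g i \<xi> \<partial>N i))"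
    by (rule sum_ennreal[symmetric]) (simp add: Bochner_Integration.integral_nonneg nonneg)
  also have "\<dots> = (\<Sum>i\<in>I. \<integral>\<^sup>+\<xi>. ennreal (g i \<xi>) \<partial>N i)"
    by (intro sum.cong refl nn_integral_eq_integral[symmetric] int) (simp_all add: nonneg)
  also have "\<dots> \<le> ennreal c"
    by (rule le)
  finally show "(\<Sum>i\<in>I. \<integral>\<xi>. g i \<xi> \<partial>N i) \<le> c"
    using ennreal_le_iff[OF c] by blast
qed

lemma loss_moments_of_variance_bound:
  fixes loss :: "'n::finite \<Rightarrow> 'w \<Rightarrow> 'z \<Rightarrow> real"
  assumes P: "\<And>i. prob_space (P i)"
    and loss_meas: "\<And>i. loss i x \<in> borel_measurable (P i)"
    and f_eq: "\<And>i. f i x = (\<integral>\<xi>. loss i x \<xi> \<partial>P i)"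
    and variance: "(\<Sum>i\<in>UNIV. \<integral>\<^sup>+\<xi>. ennreal ((norm (tildeGradF loss i x \<xi> - gradF_lam f x))\<^sup>2) \<partial>P i)
          \<le> ennreal (real CARD('n) * \<sigma>\<^sup>2)"
  shows "integrable (P i) (\<lambda>\<xi>. (loss i x \<xi>)\<^sup>2)"
    and "integrable (P i) (loss i x)"
    and "real CARD('n) * (\<Sum>i\<in>UNIV. \<integral>\<xi>. (loss i x \<xi>)\<^sup>2 \<partial>P i) \<le> \<sigma>\<^sup>2 + (norm (gradF_lam f x))\<^sup>2"
proof -
  let ?N = "real CARD('n)" and ?G = "(norm (gradF_lam f x))\<^sup>2"
  define Q where "Q i \<xi> = (norm (tildeGradF loss i x \<xi> - gradF_lam f x))\<^sup>2" for i \<xi>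
  have Q_eq: "Q i \<xi> = ?N\<^sup>2 * (loss i x \<xi>)\<^sup>2 - 2 * ?N * f i x * loss i x \<xi> + ?G" for i \<xi>
    unfolding Q_def by (rule power2_norm_tildeGradF_diff)
  have Q_meas: "Q i \<in> borel_measurable (P i)" for i
    unfolding Q_eq[abs_def] using loss_meas[of i] by measurable
  note Q = integrable_sum_nn_integral_le[of UNIV Q P "?N * \<sigma>\<^sup>2", OF _ Q_meas]
  have Q_int: "integrable (P i) (Q i)" and Q_sum: "(\<Sum>i\<in>UNIV. \<integral>\<xi>. Q i \<xi> \<partial>P i) \<le> ?N * \<sigma>\<^sup>2" for i
    using Q variance by (auto simp: Q_def)
  show L2: "integrable (P i) (\<lambda>\<xi>. (loss i x \<xi>)\<^sup>2)" for i
  proof (rule Bochner_Integration.integrable_bound)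
    show "integrable (P i) (\<lambda>\<xi>. 2 / ?N\<^sup>2 * (Q i \<xi> + (f i x)\<^sup>2))"
      by (intro Bochner_Integration.integrable_mult_right Bochner_Integration.integrable_add Q_int
          finite_measure.integrable_const prob_space.finite_measure[OF P])
    show "AE \<xi> in P i. norm ((loss i x \<xi>)\<^sup>2) \<le> norm (2 / ?N\<^sup>2 * (Q i \<xi> + (f i x)\<^sup>2))"
      using power2_loss_le_tildeGradF[of loss i x _ f] by (intro AE_I2) (simp add: Q_def)
  qed (use loss_meas in measurable)
  show L1: "integrable (P i) (loss i x)" for i
    using finite_measure.square_integrable_imp_integrable[OF prob_space.finite_measure[OF P] loss_meas L2]
    by blast
  have E_Q: "(\<integral>\<xi>. Q i \<xi> \<partial>P i) = ?N\<^sup>2 * (\<integral>\<xi>. (loss i x \<xi>)\<^sup>2 \<partial>P i) - 2 * ?N * (f i x)\<^sup>2 + ?G" for i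
  proof -
    interpret prob_space "P i" by (rule P)
    show ?thesis
      using L1[of i] L2[of i] by (simp add: Q_eq prob_space f_eq[of i] power2_eq_square)
  qed
  have "(\<Sum>i\<in>UNIV. \<integral>\<xi>. Q i \<xi> \<partial>P i)
      = ?N\<^sup>2 * (\<Sum>i\<in>UNIV. \<integral>\<xi>. (loss i x \<xi>)\<^sup>2 \<partial>P i) - 2 * ?N * (\<Sum>i\<in>UNIV. (f i x)\<^sup>2) + ?N * ?G"
    by (simp only: E_Q sum.distrib sum_subtractf sum_distrib_left[symmetric] sum_constant)
  moreover have "(\<Sum>i\<in>UNIV. (f i x)\<^sup>2) = ?G"
    by (simp add: power2_norm_vec_eq_sum gradF_lam_def)
  ultimately have "?N * (?N * (\<Sum>i\<in>UNIV. \<integral>\<xi>. (loss i x \<xi>)\<^sup>2 \<partial>P i)) \<le> ?N * (\<sigma>\<^sup>2 + ?G)"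
    using Q_sum by (simp add: power2_eq_square algebra_simps)
  then show "?N * (\<Sum>i\<in>UNIV. \<integral>\<xi>. (loss i x \<xi>)\<^sup>2 \<partial>P i) \<le> \<sigma>\<^sup>2 + ?G"
    by (simp add: mult_le_cancel_left_pos)
qed

lemma measurable_vec_nth[measurable (raw)]:
  "f \<in> borel_measurable M \<Longrightarrow> (\<lambda>x. (f x :: real^'n::finite) $ i) \<in> borel_measurable M"
  by (rule measurable_compose[OF _ borel_measurable_nth])

lemma sampled_clients_sum_abs_le:
  "\<bar>sampled_clients_sum t h y\<bar> \<le> sampled_clients_sum t (\<lambda>i \<xi>. \<bar>h i \<xi>\<bar>) y"
  unfolding sampled_clients_sum_def by (auto intro!: order.trans[OF sum_abs] sum_mono)

lemma nn_integral_abs_sampled_clients_sum_le: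
  fixes P :: "'n::finite \<Rightarrow> 'z measure" and h :: "'n \<Rightarrow> 'z \<Rightarrow> real"
  assumes P: "\<And>i. prob_space (P i)" and m: "m \<le> CARD('n)"
    and h: "\<And>i. integrable (P i) (h i)" and t: "t \<in> {s*\<tau>+1..(s+1)*\<tau>}"
  shows "(\<integral>\<^sup>+y. ennreal \<bar>sampled_clients_sum t h y\<bar> \<partial>sample_law P \<tau> m s)
    \<le> ennreal (\<Sum>i\<in>UNIV. \<integral>\<xi>. \<bar>h i \<xi>\<bar> \<partial>P i)"
proof -
  let ?c = "real m / (real CARD('n) * real \<tau>)" and ?A = "\<Sum>i\<in>UNIV. \<integral>\<xi>. \<bar>h i \<xi>\<bar> \<partial>P i"
  have abs_int: "integrable (P i) (\<lambda>\<xi>. \<bar>h i \<xi>\<bar>)" for i using h by auto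
  have \<tau>: "1 \<le> \<tau>" using t by (cases \<tau>) auto
  then have "m \<le> CARD('n) * \<tau>"
    using m by (metis le_trans mult_le_mono2 mult.right_neutral)
  then have "real m \<le> real CARD('n) * real \<tau>"
    by (metis of_nat_mono of_nat_mult)
  then have c: "0 \<le> ?c" "?c \<le> 1"
    using \<tau> by (simp_all add: divide_le_eq_1)
  have A: "0 \<le> ?A" by (intro sum_nonneg) simp
  have "(\<integral>\<^sup>+y. ennreal \<bar>sampled_clients_sum t h y\<bar> \<partial>sample_law P \<tau> m s)
      \<le> ennreal (\<integral>y. sampled_clients_sum t (\<lambda>i \<xi>. \<bar>h i \<xi>\<bar>) y \<partial>sample_law P \<tau> m s)"
    by (intro nn_integral_abs_le_integral sampled_clients_sum_abs_le
        integral_sample_law_sampled_clients_sum(1)[OF P m abs_int t])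
  also have "\<dots> = ennreal (?c * ?A)"
    by (simp add: integral_sample_law_sampled_clients_sum(2)[OF P m abs_int t])
  also have "\<dots> \<le> ennreal ?A"
    by (rule ennreal_leI[OF mult_left_le_one_le[OF A c]])
  finally show ?thesis .
qed

text \<open>The hypotheses of the theorem that the dual analysis uses.\<close>

locale drdm_dual = prob_space M
  for M :: "'a measure" +
  fixes P :: "'n::finite \<Rightarrow> 'z measure"
    and loss :: "'n \<Rightarrow> 'w::euclidean_space \<Rightarrow> 'z \<Rightarrow> real"
    and f :: "'n \<Rightarrow> 'w \<Rightarrow> real"
    and W :: "'w set"
    and G_lam sigma_lam \<gamma> :: real
    and S \<tau> m :: nat
    and w :: "nat \<Rightarrow> 'a \<Rightarrow> 'w"
    and lam :: "nat \<Rightarrow> 'a \<Rightarrow> real^'n"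
    and tp :: "nat \<Rightarrow> 'a \<Rightarrow> nat"
    and U :: "nat \<Rightarrow> 'a \<Rightarrow> 'n set"
    and \<zeta> :: "nat \<Rightarrow> 'n \<Rightarrow> 'a \<Rightarrow> 'z"
    and l :: "real^'n"
  assumes prob_P: "\<And>i. prob_space (P i)"
    and closed_W: "closed W"
    and loss_measurable: "\<And>i. (\<lambda>(x, \<xi>). loss i x \<xi>) \<in> borel_measurable (borel \<Otimes>\<^sub>M P i)"
    and f_eq: "\<And>i x. x \<in> W \<Longrightarrow> f i x = (\<integral>\<xi>. loss i x \<xi> \<partial>P i)"
    and gradF_lam_bounded: "\<And>x. x \<in> W \<Longrightarrow> norm (gradF_lam f x) \<le> G_lam"
    and variance_bounded: "\<And>x. x \<in> W \<Longrightarrow>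
        (\<Sum>i\<in>UNIV. \<integral>\<^sup>+\<xi>. ennreal ((norm (tildeGradF loss i x \<xi> - gradF_lam f x))\<^sup>2) \<partial>P i)
          \<le> ennreal (real CARD('n) * sigma_lam\<^sup>2)"
    and \<tau>_pos: "1 \<le> \<tau>" and m_pos: "1 \<le> m" and m_le: "m \<le> CARD('n)" and \<gamma>_pos: "0 < \<gamma>"
    and w_in: "\<And>t \<omega>. \<omega> \<in> space M \<Longrightarrow> w t \<omega> \<in> W"
    and w_measurable: "\<And>t. w t \<in> borel_measurable M"
    and lam_measurable: "\<And>s. lam s \<in> borel_measurable M"
    and lam0: "\<And>\<omega>. \<omega> \<in> space M \<Longrightarrow> lam 0 \<omega> \<in> Lambda_set"
    and lam_step: "\<And>s \<omega>. s < S \<Longrightarrow> \<omega> \<in> space M \<Longrightarrow>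
        lam (Suc s) \<omega> = closest_point Lambda_set
          (lam s \<omega> + (real \<tau> * \<gamma>) *\<^sub>R dual_vec m loss (U s \<omega>) (w (tp s \<omega>) \<omega>) (\<lambda>i. \<zeta> s i \<omega>))"
    and sample_measurable: "\<And>s. s < S \<Longrightarrow> dual_sample tp U \<zeta> s \<in> measurable M (sample_law P \<tau> m s)"
    and sample_distr: "\<And>s. s < S \<Longrightarrow>
        distr M (sample_law P \<tau> m s) (dual_sample tp U \<zeta> s) = sample_law P \<tau> m s"
    and sample_indep: "\<And>s. s < S \<Longrightarrow> indep_set
        (sigma_sets (space M) (history_events M P \<tau> m w lam tp U \<zeta> s))
        (sigma_sets (space M) (rv_events M (sample_law P \<tau> m s) (dual_sample tp U \<zeta> s)))"
    and l_in: "l \<in> Lambda_set"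
begin

abbreviation round_iters :: "nat \<Rightarrow> nat set" where
  "round_iters s \<equiv> {s*\<tau>+1..(s+1)*\<tau>}"

definition dual_grad :: "nat \<Rightarrow> 'a \<Rightarrow> real^'n" where
  "dual_grad s \<omega> = dual_vec m loss (U s \<omega>) (w (tp s \<omega>) \<omega>) (\<lambda>i. \<zeta> s i \<omega>)"

definition sampled_sum :: "nat \<Rightarrow> ((real^'n) \<times> 'w \<Rightarrow> 'n \<Rightarrow> 'z \<Rightarrow> real) \<Rightarrow> 'a \<Rightarrow> real" where
  "sampled_sum s h \<omega> =
     (\<Sum>i\<in>UNIV. if i \<in> U s \<omega> then h (lam s \<omega>, w (tp s \<omega>) \<omega>) i (\<zeta> s i \<omega>) else 0)"

text \<open>The guards make the bounds required by integral_sampled_sum hold for every x; along the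
  iterates they are always satisfied.\<close>

definition dual_inner_term :: "(real^'n) \<times> 'w \<Rightarrow> 'n \<Rightarrow> 'z \<Rightarrow> real" where
  "dual_inner_term x i \<xi> = (if fst x \<in> Lambda_set \<and> snd x \<in> W
     then real CARD('n) / real m * (fst x - l)$i * loss i (snd x) \<xi> else 0)"

definition dual_norm_term :: "(real^'n) \<times> 'w \<Rightarrow> 'n \<Rightarrow> 'z \<Rightarrow> real" where
  "dual_norm_term x i \<xi> = (if snd x \<in> W then (real CARD('n) / real m)\<^sup>2 * (loss i (snd x) \<xi>)\<^sup>2 else 0)"

definition dual_dist_sq :: "nat \<Rightarrow> real" where
  "dual_dist_sq s = (\<integral>\<omega>. (norm (lam s \<omega> - l))\<^sup>2 \<partial>M)"

definition round_gap :: "nat \<Rightarrow> real" where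
  "round_gap s = (\<Sum>t\<in>round_iters s. \<integral>\<omega>. Fobj f (w t \<omega>) l - Fobj f (w t \<omega>) (lam s \<omega>) \<partial>M)"

lemmas [measurable] = loss_measurable w_measurable lam_measurable

lemma W_borel[measurable]: "W \<in> sets borel"
  using closed_W by (rule borel_closed)

lemma Lambda_borel[measurable]: "(Lambda_set :: (real^'n) set) \<in> sets borel"
  by (rule borel_closed[OF Lambda_closed])

lemma lam_in_Lambda: "s \<le> S \<Longrightarrow> \<omega> \<in> space M \<Longrightarrow> lam s \<omega> \<in> Lambda_set"
proof (induction s)
  case 0
  then show ?case by (simp add: lam0)
next
  case (Suc s)
  then show ?case using l_in by (auto simp: lam_step intro!: closest_point_in_set[OF Lambda_closed])
qed

lemma integrable_power2_dist_lam:
  assumes "s \<le> S"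
  shows "integrable M (\<lambda>\<omega>. (norm (lam s \<omega> - l))\<^sup>2)"
proof (rule integrable_const_bound)
  show "AE \<omega> in M. norm ((norm (lam s \<omega> - l))\<^sup>2) \<le> 2"
    using Lambda_power2_norm_diff_le[OF lam_in_Lambda[OF assms] l_in] by (intro AE_I2) simp
qed measurable

lemma loss_second_moments:
  assumes "x \<in> W"
  shows "integrable (P i) (\<lambda>\<xi>. (loss i x \<xi>)\<^sup>2)" and "integrable (P i) (loss i x)"
    and "real CARD('n) * (\<Sum>i\<in>UNIV. \<integral>\<xi>. (loss i x \<xi>)\<^sup>2 \<partial>P i) \<le> sigma_lam\<^sup>2 + G_lam\<^sup>2"
proof -
  have meas: "loss i x \<in> borel_measurable (P i)" for i by measurable
  note moments = loss_moments_of_variance_bound[OF prob_P meas f_eq[OF assms] variance_bounded[OF assms]]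
  show "integrable (P i) (\<lambda>\<xi>. (loss i x \<xi>)\<^sup>2)" "integrable (P i) (loss i x)"
    by (fact moments)+
  have "(norm (gradF_lam f x))\<^sup>2 \<le> G_lam\<^sup>2"
    using gradF_lam_bounded[OF assms] by (simp add: power_mono)
  then show "real CARD('n) * (\<Sum>i\<in>UNIV. \<integral>\<xi>. (loss i x \<xi>)\<^sup>2 \<partial>P i) \<le> sigma_lam\<^sup>2 + G_lam\<^sup>2"
    using moments(3) by linarith
qed

lemma sum_loss_second_moment_le:
  assumes "x \<in> W"
  shows "(\<Sum>i\<in>UNIV. \<integral>\<xi>. (loss i x \<xi>)\<^sup>2 \<partial>P i) \<le> sigma_lam\<^sup>2 + G_lam\<^sup>2"
proof -
  have "0 \<le> (\<Sum>i\<in>UNIV. \<integral>\<xi>. (loss i x \<xi>)\<^sup>2 \<partial>P i)" by (intro sum_nonneg) simp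
  moreover have "1 \<le> real CARD('n)" by (simp add: Suc_le_eq)
  ultimately show ?thesis
    using loss_second_moments(3)[OF assms] by (smt (verit) mult_le_cancel_right1)
qed

lemma sum_integral_abs_loss_le:
  assumes "x \<in> W"
  shows "(\<Sum>i\<in>UNIV. \<integral>\<xi>. \<bar>loss i x \<xi>\<bar> \<partial>P i) \<le> real CARD('n) + sigma_lam\<^sup>2 + G_lam\<^sup>2"
proof -
  have "(\<integral>\<xi>. \<bar>loss i x \<xi>\<bar> \<partial>P i) \<le> 1 + (\<integral>\<xi>. (loss i x \<xi>)\<^sup>2 \<partial>P i)" for i
  proof -
    have sq_int: "integrable (P i) (\<lambda>\<xi>. (loss i x \<xi>)\<^sup>2)"
      by (rule loss_second_moments(1)[OF assms])
    have one_int: "integrable (P i) (\<lambda>\<xi>. 1)"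
      by (rule finite_measure.integrable_const[OF prob_space.finite_measure[OF prob_P]])
    have "\<bar>r\<bar> \<le> 1 + r\<^sup>2" for r :: real
      using zero_le_power2[of "\<bar>r\<bar> - 1"] by (simp add: power2_eq_square algebra_simps abs_mult_self_eq)
    then have "(\<integral>\<xi>. \<bar>loss i x \<xi>\<bar> \<partial>P i) \<le> (\<integral>\<xi>. 1 + (loss i x \<xi>)\<^sup>2 \<partial>P i)"
      by (intro integral_mono Bochner_Integration.integrable_abs Bochner_Integration.integrable_add
          loss_second_moments(2)[OF assms] sq_int one_int)
    also have "\<dots> = (\<integral>\<xi>. 1 \<partial>P i) + (\<integral>\<xi>. (loss i x \<xi>)\<^sup>2 \<partial>P i)"
      by (rule Bochner_Integration.integral_add[OF one_int sq_int])
    also have "(\<integral>\<xi>. 1 \<partial>P i) = (1::real)"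
      using prob_space.prob_space[OF prob_P, of i] by simp
    finally show ?thesis .
  qed
  then have "(\<Sum>i\<in>UNIV. \<integral>\<xi>. \<bar>loss i x \<xi>\<bar> \<partial>P i)
      \<le> (\<Sum>i\<in>UNIV. 1 + (\<integral>\<xi>. (loss i x \<xi>)\<^sup>2 \<partial>P i))"
    by (rule sum_mono)
  also have "\<dots> = real CARD('n) + (\<Sum>i\<in>UNIV. \<integral>\<xi>. (loss i x \<xi>)\<^sup>2 \<partial>P i)"
    by (simp add: sum.distrib)
  finally show ?thesis using sum_loss_second_moment_le[OF assms] by linarith
qed

lemma indep_history_sample:
  assumes s: "s < S" and t: "t \<le> (s+1)*\<tau>"
    and A: "A \<in> sets (borel \<Otimes>\<^sub>M borel)" and B: "B \<in> sets (sample_law P \<tau> m s)"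
  shows "prob (((\<lambda>\<omega>. (lam s \<omega>, w t \<omega>)) -` A \<inter> space M) \<inter> (dual_sample tp U \<zeta> s -` B \<inter> space M))
       = prob ((\<lambda>\<omega>. (lam s \<omega>, w t \<omega>)) -` A \<inter> space M) * prob (dual_sample tp U \<zeta> s -` B \<inter> space M)"
proof -
  let ?H = "history_events M P \<tau> m w lam tp U \<zeta> s"
  let ?M' = "sigma (space M) ?H"
  have H: "?H \<subseteq> Pow (space M)"
    unfolding history_events_def rv_events_def by auto
  have history_measurable: "X \<in> measurable ?M' borel"
    if "\<And>C. C \<in> sets borel \<Longrightarrow> X -` C \<inter> space M \<in> ?H" for X :: "'a \<Rightarrow> 'b::topological_space"
    using that by (intro measurableI) (auto simp: space_measure_of[OF H] sets_measure_of[OF H])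
  have "(\<lambda>\<omega>. (lam s \<omega>, w t \<omega>)) \<in> measurable ?M' (borel \<Otimes>\<^sub>M borel)"
  proof (intro measurable_Pair history_measurable)
    fix C :: "(real^'n) set" assume "C \<in> sets borel"
    then show "lam s -` C \<inter> space M \<in> ?H" unfolding history_events_def rv_events_def by blast
  next
    fix C :: "'w set" assume "C \<in> sets borel"
    then show "w t -` C \<inter> space M \<in> ?H" unfolding history_events_def rv_events_def using t by blast
  qed
  from measurable_sets[OF this A]
  have "(\<lambda>\<omega>. (lam s \<omega>, w t \<omega>)) -` A \<inter> space M \<in> sigma_sets (space M) ?H"
    by (simp add: space_measure_of[OF H] sets_measure_of[OF H])
  moreover have "dual_sample tp U \<zeta> s -` B \<inter> space M
      \<in> sigma_sets (space M) (rv_events M (sample_law P \<tau> m s) (dual_sample tp U \<zeta> s))"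
    using B unfolding rv_events_def by blast
  ultimately show ?thesis by (rule indep_setD[OF sample_indep[OF s]])
qed

lemma AE_sampled_iter_in_round:
  assumes s: "s < S"
  shows "AE \<omega> in M. tp s \<omega> \<in> round_iters s"
proof -
  let ?R = "measure_pmf (pmf_of_set (round_iters s))"
  have "prob_space (measure_pmf (pmf_of_set {A::'n set. card A = m}) \<Otimes>\<^sub>M PiM UNIV P)"
    by (intro prob_space_pair prob_space_measure_pmf prob_space_PiM prob_P)
  then have fst_law: "distr (sample_law P \<tau> m s) ?R fst = ?R"
    unfolding sample_law_def by (rule prob_space.distr_pair_fst)
  have fst_meas: "fst \<in> measurable (sample_law P \<tau> m s) ?R"
    unfolding sample_law_def by (rule measurable_fst)
  have "AE t in ?R. t \<in> round_iters s"
    using \<tau>_pos by (simp add: AE_measure_pmf_iff)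
  then have "AE y in sample_law P \<tau> m s. fst y \<in> round_iters s"
    by (intro AE_distrD[OF fst_meas]) (simp only: fst_law)
  then have "AE \<omega> in M. fst (dual_sample tp U \<zeta> s \<omega>) \<in> round_iters s"
    by (intro AE_distrD[OF sample_measurable[OF s]]) (simp only: sample_distr[OF s])
  then show ?thesis by (simp add: dual_sample_def)
qed

lemma measurable_sampled_sum:
  assumes s: "s < S"
    and h_meas: "\<And>i. (\<lambda>(x, \<xi>). h x i \<xi>) \<in> borel_measurable ((borel \<Otimes>\<^sub>M borel) \<Otimes>\<^sub>M P i)"
  shows "sampled_sum s h \<in> borel_measurable M"
proof -
  note [measurable] = h_meas
  have Y[measurable]: "dual_sample tp U \<zeta> s \<in> measurable M
      (measure_pmf (pmf_of_set (round_iters s)) \<Otimes>\<^sub>M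
        (measure_pmf (pmf_of_set {A::'n set. card A = m}) \<Otimes>\<^sub>M PiM UNIV P))"
    using sample_measurable[OF s] unfolding sample_law_def .
  have "(\<lambda>\<omega>. fst (dual_sample tp U \<zeta> s \<omega>)) \<in> measurable M (measure_pmf (pmf_of_set (round_iters s)))"
    by measurable
  then have tp[measurable]: "tp s \<in> measurable M (count_space UNIV)"
    by (simp add: dual_sample_def)
  have "(\<lambda>\<omega>. fst (snd (dual_sample tp U \<zeta> s \<omega>)))
      \<in> measurable M (measure_pmf (pmf_of_set {A::'n set. card A = m}))"
    by measurable
  then have U[measurable]: "U s \<in> measurable M (count_space UNIV)"
    by (simp add: dual_sample_def)
  have "(\<lambda>\<omega>. snd (snd (dual_sample tp U \<zeta> s \<omega>)) i) \<in> measurable M (P i)" for i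
    by measurable
  then have \<zeta>[measurable]: "\<zeta> s i \<in> measurable M (P i)" for i
    by (simp add: dual_sample_def)
  have "(\<lambda>\<omega>. h (lam s \<omega>, w t \<omega>) i (\<zeta> s i \<omega>)) \<in> borel_measurable M" for t i
    by measurable
  then have "(\<lambda>\<omega>. h (lam s \<omega>, w (tp s \<omega>) \<omega>) i (\<zeta> s i \<omega>)) \<in> borel_measurable M" for i
    by (rule measurable_compose_countable[OF _ tp])
  moreover have "Measurable.pred M (\<lambda>\<omega>. i \<in> U s \<omega>)" for i
    by (rule measurable_compose[OF U]) simp
  ultimately show ?thesis
    unfolding sampled_sum_def by measurable
qed

text \<open>The sampled iteration t' is itself random, so the sampled sum is split over its possible
  values t: each summand depends on the history only through (lam s, w t), which is independent
  of the fresh sample.\<close>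

lemma AE_sum_sampled_clients_sum_eq_sampled_sum:
  assumes "s < S"
  shows "AE \<omega> in M. (\<Sum>t\<in>round_iters s.
      sampled_clients_sum t (h (lam s \<omega>, w t \<omega>)) (dual_sample tp U \<zeta> s \<omega>)) = sampled_sum s h \<omega>"
  using AE_sampled_iter_in_round[OF assms]
proof eventually_elim
  case (elim \<omega>)
  have "sampled_clients_sum t (h (lam s \<omega>, w t \<omega>)) (dual_sample tp U \<zeta> s \<omega>)
      = (if tp s \<omega> = t then sampled_sum s h \<omega> else 0)" for t
  proof (cases "tp s \<omega> = t")
    case True
    then show ?thesis
      unfolding True[symmetric] sampled_clients_sum_def dual_sample_def sampled_sum_def fst_conv snd_conv
      by simp
  next
    case False
    then show ?thesis by (simp add: sampled_clients_sum_def dual_sample_def)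
  qed
  then show ?case using elim by (simp only: sum.delta' finite_atLeastAtMost if_True)
qed

lemma integral_sampled_clients_sum_history:
  fixes h :: "(real^'n) \<times> 'w \<Rightarrow> 'n \<Rightarrow> 'z \<Rightarrow> real"
  assumes s: "s < S" and t: "t \<in> round_iters s"
    and h_meas: "\<And>i. (\<lambda>(x, \<xi>). h x i \<xi>) \<in> borel_measurable ((borel \<Otimes>\<^sub>M borel) \<Otimes>\<^sub>M P i)"
    and h_int: "\<And>x i. integrable (P i) (h x i)"
    and h_bound: "\<And>x. (\<Sum>i\<in>UNIV. \<integral>\<xi>. \<bar>h x i \<xi>\<bar> \<partial>P i) \<le> B"
  shows "integrable M (\<lambda>\<omega>. sampled_clients_sum t (h (lam s \<omega>, w t \<omega>)) (dual_sample tp U \<zeta> s \<omega>))"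
    and "(\<integral>\<omega>. sampled_clients_sum t (h (lam s \<omega>, w t \<omega>)) (dual_sample tp U \<zeta> s \<omega>) \<partial>M)
      = real m / (real CARD('n) * real \<tau>) * (\<integral>\<omega>. (\<Sum>i\<in>UNIV. \<integral>\<xi>. h (lam s \<omega>, w t \<omega>) i \<xi> \<partial>P i) \<partial>M)"
proof -
  let ?SL = "sample_law P \<tau> m s" and ?Y = "dual_sample tp U \<zeta> s"
  let ?X = "\<lambda>\<omega>. (lam s \<omega>, w t \<omega>)"
  note [measurable] = h_meas
  have X: "?X \<in> measurable M (borel \<Otimes>\<^sub>M borel)" by measurable
  have g: "(\<lambda>(x, y). sampled_clients_sum t (h x) y) \<in> borel_measurable ((borel \<Otimes>\<^sub>M borel) \<Otimes>\<^sub>M ?SL)"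
    unfolding sampled_clients_sum_def sample_law_def by measurable
  have indep: "prob ((?X -` A \<inter> space M) \<inter> (?Y -` B' \<inter> space M))
      = prob (?X -` A \<inter> space M) * prob (?Y -` B' \<inter> space M)"
    if "A \<in> sets (borel \<Otimes>\<^sub>M borel)" "B' \<in> sets ?SL" for A B'
    using indep_history_sample[OF s _ that] t by simp
  have bound: "(\<integral>\<^sup>+y. ennreal \<bar>sampled_clients_sum t (h x) y\<bar> \<partial>?SL) \<le> ennreal B" for x
    using nn_integral_abs_sampled_clients_sum_le[OF prob_P m_le h_int t] h_bound[of x]
    by (rule order.trans[OF _ ennreal_leI])
  note pair = integral_indep_pair[OF X sample_measurable[OF s] sample_distr[OF s] indep g bound]
  show "integrable M (\<lambda>\<omega>. sampled_clients_sum t (h (?X \<omega>)) (?Y \<omega>))"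
    by (rule pair(1))
  have "(\<integral>\<omega>. sampled_clients_sum t (h (?X \<omega>)) (?Y \<omega>) \<partial>M)
      = (\<integral>\<omega>. (\<integral>y. sampled_clients_sum t (h (?X \<omega>)) y \<partial>?SL) \<partial>M)"
    by (rule pair(2))
  also have "\<dots> = (\<integral>\<omega>. real m / (real CARD('n) * real \<tau>) * (\<Sum>i\<in>UNIV. \<integral>\<xi>. h (?X \<omega>) i \<xi> \<partial>P i) \<partial>M)"
    by (simp only: integral_sample_law_sampled_clients_sum(2)[OF prob_P m_le h_int t])
  finally show "(\<integral>\<omega>. sampled_clients_sum t (h (?X \<omega>)) (?Y \<omega>) \<partial>M)
      = real m / (real CARD('n) * real \<tau>) * (\<integral>\<omega>. (\<Sum>i\<in>UNIV. \<integral>\<xi>. h (?X \<omega>) i \<xi> \<partial>P i) \<partial>M)"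
    by (simp only: integral_mult_right_zero)
qed

lemma integral_sampled_sum:
  fixes h :: "(real^'n) \<times> 'w \<Rightarrow> 'n \<Rightarrow> 'z \<Rightarrow> real"
  assumes s: "s < S"
    and h_meas: "\<And>i. (\<lambda>(x, \<xi>). h x i \<xi>) \<in> borel_measurable ((borel \<Otimes>\<^sub>M borel) \<Otimes>\<^sub>M P i)"
    and h_int: "\<And>x i. integrable (P i) (h x i)"
    and h_bound: "\<And>x. (\<Sum>i\<in>UNIV. \<integral>\<xi>. \<bar>h x i \<xi>\<bar> \<partial>P i) \<le> B"
  shows "integrable M (sampled_sum s h)"
    and "(\<integral>\<omega>. sampled_sum s h \<omega> \<partial>M) = real m / (real CARD('n) * real \<tau>) *
      (\<Sum>t\<in>round_iters s. \<integral>\<omega>. (\<Sum>i\<in>UNIV. \<integral>\<xi>. h (lam s \<omega>, w t \<omega>) i \<xi> \<partial>P i) \<partial>M)"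
proof -
  let ?g = "\<lambda>\<omega>. \<Sum>t\<in>round_iters s. sampled_clients_sum t (h (lam s \<omega>, w t \<omega>)) (dual_sample tp U \<zeta> s \<omega>)"
  note round = integral_sampled_clients_sum_history[OF s _ h_meas h_int h_bound]
  note split = AE_sum_sampled_clients_sum_eq_sampled_sum[OF s, of h]
  have g_int: "integrable M ?g"
    using round(1) by (rule Bochner_Integration.integrable_sum)
  show "integrable M (sampled_sum s h)"
    by (rule integrable_cong_AE_imp[OF g_int measurable_sampled_sum[OF s h_meas] split])
  have "(\<integral>\<omega>. sampled_sum s h \<omega> \<partial>M) = (\<integral>\<omega>. ?g \<omega> \<partial>M)"
    by (rule integral_cong_AE[OF borel_measurable_integrable[OF g_int]
          measurable_sampled_sum[OF s h_meas] split, symmetric])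
  also have "\<dots> = real m / (real CARD('n) * real \<tau>) *
      (\<Sum>t\<in>round_iters s. \<integral>\<omega>. (\<Sum>i\<in>UNIV. \<integral>\<xi>. h (lam s \<omega>, w t \<omega>) i \<xi> \<partial>P i) \<partial>M)"
    using round by (simp add: Bochner_Integration.integral_sum sum_distrib_left)
  finally show "(\<integral>\<omega>. sampled_sum s h \<omega> \<partial>M) = real m / (real CARD('n) * real \<tau>) *
      (\<Sum>t\<in>round_iters s. \<integral>\<omega>. (\<Sum>i\<in>UNIV. \<integral>\<xi>. h (lam s \<omega>, w t \<omega>) i \<xi> \<partial>P i) \<partial>M)" .
qed

lemma measurable_dual_inner_term:
  "(\<lambda>(x, \<xi>). dual_inner_term x i \<xi>) \<in> borel_measurable ((borel \<Otimes>\<^sub>M borel) \<Otimes>\<^sub>M P i)"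
  unfolding dual_inner_term_def by measurable

lemma measurable_dual_norm_term:
  "(\<lambda>(x, \<xi>). dual_norm_term x i \<xi>) \<in> borel_measurable ((borel \<Otimes>\<^sub>M borel) \<Otimes>\<^sub>M P i)"
  unfolding dual_norm_term_def by measurable

lemma integrable_dual_inner_term: "integrable (P i) (dual_inner_term x i)"
  unfolding dual_inner_term_def using loss_second_moments(2)[of "snd x" i]
  by (cases "fst x \<in> Lambda_set"; cases "snd x \<in> W") simp_all

lemma integrable_dual_norm_term: "integrable (P i) (dual_norm_term x i)"
  unfolding dual_norm_term_def using loss_second_moments(1)[of "snd x" i]
  by (cases "snd x \<in> W") simp_all

lemma sum_integral_abs_dual_inner_term_le:
  "(\<Sum>i\<in>UNIV. \<integral>\<xi>. \<bar>dual_inner_term x i \<xi>\<bar> \<partial>P i)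
     \<le> real CARD('n) / real m * (real CARD('n) + sigma_lam\<^sup>2 + G_lam\<^sup>2)"
proof (cases "fst x \<in> Lambda_set \<and> snd x \<in> W")
  case True
  let ?c = "real CARD('n) / real m"
  have "(\<integral>\<xi>. \<bar>dual_inner_term x i \<xi>\<bar> \<partial>P i) \<le> (\<integral>\<xi>. ?c * \<bar>loss i (snd x) \<xi>\<bar> \<partial>P i)" for i
  proof (intro integral_mono Bochner_Integration.integrable_abs integrable_dual_inner_term)
    show "integrable (P i) (\<lambda>\<xi>. ?c * \<bar>loss i (snd x) \<xi>\<bar>)"
      using loss_second_moments(2)[of "snd x" i] True by simp
    fix \<xi>
    have "\<bar>(fst x - l)$i\<bar> \<le> 1" using Lambda_abs_nth_diff_le True l_in by blast
    then have "\<bar>(fst x - l)$i\<bar> * \<bar>loss i (snd x) \<xi>\<bar> \<le> \<bar>loss i (snd x) \<xi>\<bar>"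
      by (simp add: mult_left_le_one_le)
    then have "?c * (\<bar>(fst x - l)$i\<bar> * \<bar>loss i (snd x) \<xi>\<bar>) \<le> ?c * \<bar>loss i (snd x) \<xi>\<bar>"
      by (rule mult_left_mono) simp
    moreover have "\<bar>dual_inner_term x i \<xi>\<bar> = ?c * (\<bar>(fst x - l)$i\<bar> * \<bar>loss i (snd x) \<xi>\<bar>)"
      using True by (simp add: dual_inner_term_def abs_mult)
    ultimately show "\<bar>dual_inner_term x i \<xi>\<bar> \<le> ?c * \<bar>loss i (snd x) \<xi>\<bar>"
      by simp
  qed
  then have "(\<Sum>i\<in>UNIV. \<integral>\<xi>. \<bar>dual_inner_term x i \<xi>\<bar> \<partial>P i) \<le> ?c * (\<Sum>i\<in>UNIV. \<integral>\<xi>. \<bar>loss i (snd x) \<xi>\<bar> \<partial>P i)"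
    by (simp add: sum_distrib_left sum_mono)
  also have "\<dots> \<le> ?c * (real CARD('n) + sigma_lam\<^sup>2 + G_lam\<^sup>2)"
    using sum_integral_abs_loss_le True by (intro mult_left_mono) auto
  finally show ?thesis .
next
  case False
  then have "dual_inner_term x i \<xi> = 0" for i \<xi>
    unfolding dual_inner_term_def by auto
  then show ?thesis by simp
qed

lemma sum_integral_dual_norm_term_eq:
  assumes "snd x \<in> W"
  shows "(\<Sum>i\<in>UNIV. \<integral>\<xi>. dual_norm_term x i \<xi> \<partial>P i)
    = (real CARD('n) / real m)\<^sup>2 * (\<Sum>i\<in>UNIV. \<integral>\<xi>. (loss i (snd x) \<xi>)\<^sup>2 \<partial>P i)"
  using assms by (simp add: dual_norm_term_def sum_distrib_left)

lemma sum_integral_abs_dual_norm_term_le: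
  "(\<Sum>i\<in>UNIV. \<integral>\<xi>. \<bar>dual_norm_term x i \<xi>\<bar> \<partial>P i) \<le> (real CARD('n) / real m)\<^sup>2 * (sigma_lam\<^sup>2 + G_lam\<^sup>2)"
proof (cases "snd x \<in> W")
  case True
  have "\<bar>dual_norm_term x i \<xi>\<bar> = dual_norm_term x i \<xi>" for i \<xi>
    by (simp add: dual_norm_term_def)
  then show ?thesis
    using sum_integral_dual_norm_term_eq[OF True] sum_loss_second_moment_le[OF True]
    by (simp add: mult_left_mono)
next
  case False
  then show ?thesis by (simp add: dual_norm_term_def)
qed

lemma inner_dual_grad_eq:
  assumes "s \<le> S" "\<omega> \<in> space M"
  shows "inner (dual_grad s \<omega>) (lam s \<omega> - l) = sampled_sum s dual_inner_term \<omega>"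
  using lam_in_Lambda[OF assms] w_in[OF assms(2)]
  by (auto simp: dual_grad_def sampled_sum_def dual_inner_term_def dual_vec_def inner_vec_def
      inner_real_def intro!: sum.cong)

lemma power2_norm_dual_grad_eq:
  assumes "\<omega> \<in> space M"
  shows "(norm (dual_grad s \<omega>))\<^sup>2 = sampled_sum s dual_norm_term \<omega>"
  using w_in[OF assms]
  by (auto simp: power2_norm_vec_eq_sum dual_grad_def sampled_sum_def dual_norm_term_def dual_vec_def
      power_mult_distrib power_divide intro!: sum.cong)

lemma integral_inner_dual_grad:
  assumes s: "s < S"
  shows "integrable M (\<lambda>\<omega>. inner (dual_grad s \<omega>) (lam s \<omega> - l))"
    and "(\<integral>\<omega>. inner (dual_grad s \<omega>) (lam s \<omega> - l) \<partial>M) = - round_gap s / real \<tau>"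
proof -
  let ?c = "real CARD('n) / real m"
  let ?F = "\<lambda>t \<omega>. Fobj f (w t \<omega>) l - Fobj f (w t \<omega>) (lam s \<omega>)"
  have eq: "inner (dual_grad s \<omega>) (lam s \<omega> - l) = sampled_sum s dual_inner_term \<omega>"
    if "\<omega> \<in> space M" for \<omega>
    using s that by (intro inner_dual_grad_eq) auto
  note E = integral_sampled_sum[OF s measurable_dual_inner_term integrable_dual_inner_term
      sum_integral_abs_dual_inner_term_le]
  show "integrable M (\<lambda>\<omega>. inner (dual_grad s \<omega>) (lam s \<omega> - l))"
    using E(1) by (simp add: Bochner_Integration.integrable_cong[OF refl eq])
  have gap: "(\<Sum>i\<in>UNIV. \<integral>\<xi>. dual_inner_term (lam s \<omega>, w t \<omega>) i \<xi> \<partial>P i) = - (?c * ?F t \<omega>)"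
    if \<omega>: "\<omega> \<in> space M" for t \<omega>
  proof -
    have "(\<integral>\<xi>. dual_inner_term (lam s \<omega>, w t \<omega>) i \<xi> \<partial>P i) = ?c * ((lam s \<omega> - l)$i * f i (w t \<omega>))"
      for i
      using lam_in_Lambda[of s \<omega>] s \<omega> w_in[OF \<omega>] by (simp add: dual_inner_term_def f_eq mult.assoc)
    then have "(\<Sum>i\<in>UNIV. \<integral>\<xi>. dual_inner_term (lam s \<omega>, w t \<omega>) i \<xi> \<partial>P i)
        = ?c * (\<Sum>i\<in>UNIV. (lam s \<omega> - l)$i * f i (w t \<omega>))"
      by (simp only: sum_distrib_left)
    also have "(\<Sum>i\<in>UNIV. (lam s \<omega> - l)$i * f i (w t \<omega>)) = - ?F t \<omega>"
      by (simp add: Fobj_def sum_subtractf left_diff_distrib)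
    finally show ?thesis by (simp only: mult_minus_right)
  qed
  have "(\<integral>\<omega>. inner (dual_grad s \<omega>) (lam s \<omega> - l) \<partial>M) = (\<integral>\<omega>. sampled_sum s dual_inner_term \<omega> \<partial>M)"
    by (rule Bochner_Integration.integral_cong[OF refl eq])
  also have "\<dots> = real m / (real CARD('n) * real \<tau>) * (\<Sum>t\<in>round_iters s. \<integral>\<omega>. - (?c * ?F t \<omega>) \<partial>M)"
    unfolding E(2) by (simp only: Bochner_Integration.integral_cong[OF refl gap])
  also have "\<dots> = - (real m / (real CARD('n) * real \<tau>) * ?c) * round_gap s"
    by (simp add: round_gap_def sum_distrib_left sum_negf)
  also have "\<dots> = - round_gap s / real \<tau>"
    using m_pos by simp
  finally show "(\<integral>\<omega>. inner (dual_grad s \<omega>) (lam s \<omega> - l) \<partial>M) = - round_gap s / real \<tau>" .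
qed

lemma integral_norm_dual_grad_le:
  assumes s: "s < S"
  shows "integrable M (\<lambda>\<omega>. (norm (dual_grad s \<omega>))\<^sup>2)"
    and "(\<integral>\<omega>. (norm (dual_grad s \<omega>))\<^sup>2 \<partial>M) \<le> (sigma_lam\<^sup>2 + G_lam\<^sup>2) / real m"
proof -
  let ?c = "real CARD('n) / real m" and ?K = "sigma_lam\<^sup>2 + G_lam\<^sup>2"
  have eq: "(norm (dual_grad s \<omega>))\<^sup>2 = sampled_sum s dual_norm_term \<omega>" if "\<omega> \<in> space M" for \<omega>
    using that by (rule power2_norm_dual_grad_eq)
  note E = integral_sampled_sum[OF s measurable_dual_norm_term integrable_dual_norm_term
      sum_integral_abs_dual_norm_term_le]
  show "integrable M (\<lambda>\<omega>. (norm (dual_grad s \<omega>))\<^sup>2)"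
    using E(1) by (simp add: Bochner_Integration.integrable_cong[OF refl eq])
  have round_term: "(\<integral>\<omega>. (\<Sum>i\<in>UNIV. \<integral>\<xi>. dual_norm_term (lam s \<omega>, w t \<omega>) i \<xi> \<partial>P i) \<partial>M)
      \<le> ?c\<^sup>2 * ?K / real CARD('n)" for t
  proof (rule integral_le_const_nonneg)
    fix \<omega> assume \<omega>: "\<omega> \<in> space M"
    let ?Sq = "\<Sum>i\<in>UNIV. \<integral>\<xi>. (loss i (w t \<omega>) \<xi>)\<^sup>2 \<partial>P i"
    have "real CARD('n) * ?Sq \<le> ?K"
      using loss_second_moments(3)[OF w_in[OF \<omega>]] .
    then have "?Sq \<le> ?K / real CARD('n)"
      by (simp add: pos_le_divide_eq mult.commute)
    then have "?c\<^sup>2 * ?Sq \<le> ?c\<^sup>2 * (?K / real CARD('n))"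
      by (rule mult_left_mono) simp
    moreover have "(\<Sum>i\<in>UNIV. \<integral>\<xi>. dual_norm_term (lam s \<omega>, w t \<omega>) i \<xi> \<partial>P i) = ?c\<^sup>2 * ?Sq"
      using sum_integral_dual_norm_term_eq[of "(lam s \<omega>, w t \<omega>)"] w_in[OF \<omega>] by simp
    ultimately show "(\<Sum>i\<in>UNIV. \<integral>\<xi>. dual_norm_term (lam s \<omega>, w t \<omega>) i \<xi> \<partial>P i) \<le> ?c\<^sup>2 * ?K / real CARD('n)"
      by (simp only: times_divide_eq_right)
  qed simp
  have "(\<integral>\<omega>. (norm (dual_grad s \<omega>))\<^sup>2 \<partial>M)
      = real m / (real CARD('n) * real \<tau>) *
        (\<Sum>t\<in>round_iters s. \<integral>\<omega>. (\<Sum>i\<in>UNIV. \<integral>\<xi>. dual_norm_term (lam s \<omega>, w t \<omega>) i \<xi> \<partial>P i) \<partial>M)"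
    by (simp only: Bochner_Integration.integral_cong[OF refl eq] E(2))
  also have "\<dots> \<le> real m / (real CARD('n) * real \<tau>) * (\<Sum>t\<in>round_iters s. ?c\<^sup>2 * ?K / real CARD('n))"
    by (intro mult_left_mono sum_mono round_term) simp
  also have "\<dots> = ?K / real m"
    using m_pos \<tau>_pos by (simp add: power2_eq_square)
  finally show "(\<integral>\<omega>. (norm (dual_grad s \<omega>))\<^sup>2 \<partial>M) \<le> ?K / real m" .
qed

lemma power2_dist_lam_step_le:
  assumes "s < S" "\<omega> \<in> space M"
  shows "(norm (lam (Suc s) \<omega> - l))\<^sup>2 \<le> (norm (lam s \<omega> - l))\<^sup>2
      + 2 * (real \<tau> * \<gamma>) * inner (dual_grad s \<omega>) (lam s \<omega> - l)
      + (real \<tau> * \<gamma>)\<^sup>2 * (norm (dual_grad s \<omega>))\<^sup>2"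
proof -
  let ?y = "lam s \<omega> + (real \<tau> * \<gamma>) *\<^sub>R dual_grad s \<omega>"
  have "norm (lam (Suc s) \<omega> - l) \<le> norm (?y - l)"
    using dist_closest_point_le[OF Lambda_convex Lambda_closed l_in, of ?y] assms
    by (simp add: lam_step dual_grad_def dist_norm)
  then have "(norm (lam (Suc s) \<omega> - l))\<^sup>2 \<le> (norm ((lam s \<omega> - l) + (real \<tau> * \<gamma>) *\<^sub>R dual_grad s \<omega>))\<^sup>2"
    by (simp add: power_mono algebra_simps)
  then show ?thesis by (simp only: power2_norm_add_scaleR)
qed

lemma dual_dist_sq_step:
  assumes s: "s < S"
  shows "dual_dist_sq (Suc s) \<le> dual_dist_sq s - 2 * \<gamma> * round_gap s
      + (real \<tau> * \<gamma>)\<^sup>2 * (sigma_lam\<^sup>2 + G_lam\<^sup>2) / real m"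
proof -
  let ?a = "real \<tau> * \<gamma>"
  note inner = integral_inner_dual_grad[OF s] and sq = integral_norm_dual_grad_le[OF s]
  have dist_int: "integrable M (\<lambda>\<omega>. (norm (lam s \<omega> - l))\<^sup>2)"
    using s by (intro integrable_power2_dist_lam) simp
  have "dual_dist_sq (Suc s) \<le> (\<integral>\<omega>. (norm (lam s \<omega> - l))\<^sup>2
      + 2 * ?a * inner (dual_grad s \<omega>) (lam s \<omega> - l) + ?a\<^sup>2 * (norm (dual_grad s \<omega>))\<^sup>2 \<partial>M)"
    unfolding dual_dist_sq_def
    using s inner(1) sq(1) dist_int
    by (intro integral_mono integrable_power2_dist_lam power2_dist_lam_step_le
        Bochner_Integration.integrable_add Bochner_Integration.integrable_mult_right) auto
  also have "\<dots> = dual_dist_sq s + 2 * ?a * (- round_gap s / real \<tau>)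
      + ?a\<^sup>2 * (\<integral>\<omega>. (norm (dual_grad s \<omega>))\<^sup>2 \<partial>M)"
    using inner sq(1) dist_int by (simp add: dual_dist_sq_def)
  also have "\<dots> \<le> dual_dist_sq s + 2 * ?a * (- round_gap s / real \<tau>)
      + ?a\<^sup>2 * ((sigma_lam\<^sup>2 + G_lam\<^sup>2) / real m)"
    using sq(2) by (intro add_left_mono mult_left_mono) auto
  also have "\<dots> = dual_dist_sq s - 2 * \<gamma> * round_gap s + ?a\<^sup>2 * (sigma_lam\<^sup>2 + G_lam\<^sup>2) / real m"
    using \<tau>_pos by simp
  finally show ?thesis .
qed

lemma sum_round_gap_le:
  assumes D: "\<And>l1 l2 :: real^'n. l1 \<in> Lambda_set \<Longrightarrow> l2 \<in> Lambda_set \<Longrightarrow> dist l1 l2 \<le> D"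
  shows "2 * \<gamma> * (\<Sum>s<S. round_gap s)
    \<le> D\<^sup>2 + real S * ((real \<tau> * \<gamma>)\<^sup>2 * (sigma_lam\<^sup>2 + G_lam\<^sup>2) / real m)"
proof -
  let ?K = "(real \<tau> * \<gamma>)\<^sup>2 * (sigma_lam\<^sup>2 + G_lam\<^sup>2) / real m"
  have start: "dual_dist_sq 0 \<le> D\<^sup>2"
    unfolding dual_dist_sq_def
  proof (rule integral_le_const_nonneg)
    fix \<omega> assume \<omega>: "\<omega> \<in> space M"
    have "norm (lam 0 \<omega> - l) \<le> D" using D[OF lam0[OF \<omega>] l_in] by (simp add: dist_norm)
    then show "(norm (lam 0 \<omega> - l))\<^sup>2 \<le> D\<^sup>2" by (simp add: power_mono)
  qed simp
  have final: "0 \<le> dual_dist_sq S"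
    unfolding dual_dist_sq_def by simp
  have "2 * \<gamma> * (\<Sum>s<S. round_gap s) \<le> (\<Sum>s<S. dual_dist_sq s - dual_dist_sq (Suc s) + ?K)"
    unfolding sum_distrib_left using dual_dist_sq_step by (intro sum_mono) force
  also have "\<dots> = dual_dist_sq 0 - dual_dist_sq S + real S * ?K"
    by (simp add: sum.distrib sum_lessThan_telescope')
  finally show ?thesis using start final by linarith
qed

lemma mean_round_gap_le:
  assumes D: "\<And>l1 l2 :: real^'n. l1 \<in> Lambda_set \<Longrightarrow> l2 \<in> Lambda_set \<Longrightarrow> dist l1 l2 \<le> D"
  shows "(1 / real (S * \<tau>)) * (\<Sum>s<S. round_gap s)
    \<le> D\<^sup>2 / (2 * \<gamma> * real (S * \<tau>)) + \<gamma> * real \<tau> * G_lam\<^sup>2 / 2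
      + \<gamma> * real \<tau> * sigma_lam\<^sup>2 / (2 * real m)"
proof (cases "S = 0")
  case True
  then show ?thesis using \<gamma>_pos by simp
next
  case False
  let ?T = "real (S * \<tau>)" and ?K = "(real \<tau> * \<gamma>)\<^sup>2 * (sigma_lam\<^sup>2 + G_lam\<^sup>2) / real m"
  have T_pos: "0 < ?T" using False \<tau>_pos by simp
  have "(1 / ?T) * (\<Sum>s<S. round_gap s) = (2 * \<gamma> * (\<Sum>s<S. round_gap s)) / (2 * \<gamma> * ?T)"
    using \<gamma>_pos by simp
  also have "\<dots> \<le> (D\<^sup>2 + real S * ?K) / (2 * \<gamma> * ?T)"
    using sum_round_gap_le[OF D] \<gamma>_pos T_pos by (intro divide_right_mono) auto
  also have "\<dots> = D\<^sup>2 / (2 * \<gamma> * ?T) + \<gamma> * real \<tau> * (sigma_lam\<^sup>2 + G_lam\<^sup>2) / (2 * real m)"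
    using False \<tau>_pos \<gamma>_pos m_pos by (simp add: field_simps power2_eq_square)
  also have "\<dots> \<le> D\<^sup>2 / (2 * \<gamma> * ?T) + \<gamma> * real \<tau> * G_lam\<^sup>2 / 2
      + \<gamma> * real \<tau> * sigma_lam\<^sup>2 / (2 * real m)"
  proof -
    have "\<gamma> * real \<tau> * G_lam\<^sup>2 / (2 * real m) \<le> \<gamma> * real \<tau> * G_lam\<^sup>2 / 2"
      using \<gamma>_pos m_pos by (intro divide_left_mono) auto
    then show ?thesis by (simp add: add_divide_distrib distrib_left)
  qed
  finally show ?thesis .
qed

end

theorem mainTheorem9:
  fixes M :: "'a measure"
    and P :: "'n::finite \<Rightarrow> 'z measure"
    and loss :: "'n \<Rightarrow> 'w::euclidean_space \<Rightarrow> 'z \<Rightarrow> real"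
    and f :: "'n \<Rightarrow> 'w \<Rightarrow> real"
    and gf :: "'n \<Rightarrow> 'w \<Rightarrow> 'w"
    and gl :: "'n \<Rightarrow> 'w \<Rightarrow> 'z \<Rightarrow> 'w"
    and W :: "'w set"
    and L G_w G_lam D_W D_Lam sigma_w sigma_lam \<gamma> :: real
    and S \<tau> T m :: nat
    and w :: "nat \<Rightarrow> 'a \<Rightarrow> 'w"
    and lam :: "nat \<Rightarrow> 'a \<Rightarrow> real^'n"
    and tp :: "nat \<Rightarrow> 'a \<Rightarrow> nat"
    and U :: "nat \<Rightarrow> 'a \<Rightarrow> 'n set"
    and \<zeta> :: "nat \<Rightarrow> 'n \<Rightarrow> 'a \<Rightarrow> 'z"
    and l :: "real^'n"
  assumes M: "prob_space M"
    and P: "\<And>i. prob_space (P i)"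
    and W: "closed W" "convex W"
    \<comment> \<open>losses and local objectives\<close>
    and loss_meas: "\<And>i. (\<lambda>(x, \<xi>). loss i x \<xi>) \<in> borel_measurable (borel \<Otimes>\<^sub>M P i)"
    and f_def: "\<And>i x. x \<in> W \<Longrightarrow> f i x = (\<integral>\<xi>. loss i x \<xi> \<partial>P i)"
    \<comment> \<open>(A1) L-smoothness of the f i and of F\<close>
    and A1_grad: "\<And>i x. x \<in> W \<Longrightarrow> GDERIV (f i) x :> gf i x"
    and A1_fi: "\<And>i x y. x \<in> W \<Longrightarrow> y \<in> W \<Longrightarrow> norm (gf i x - gf i y) \<le> L * norm (x - y)"
    and A1_F: "\<And>x y l1 l2. x \<in> W \<Longrightarrow> y \<in> W \<Longrightarrow> l1 \<in> Lambda_set \<Longrightarrow> l2 \<in> Lambda_set \<Longrightarrow>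
        norm (gradF_joint f gf x l1 - gradF_joint f gf y l2) \<le> L * norm ((x, l1) - (y, l2))"
    \<comment> \<open>(A2) bounded gradients\<close>
    and A2_w: "\<And>i x. x \<in> W \<Longrightarrow> norm (gf i x) \<le> G_w"
    and A2_lam: "\<And>x. x \<in> W \<Longrightarrow> norm (gradF_lam f x) \<le> G_lam"
    \<comment> \<open>(A3) bounded domains\<close>
    and A3_W: "\<And>x y. x \<in> W \<Longrightarrow> y \<in> W \<Longrightarrow> dist x y \<le> D_W"
    and A3_Lam: "\<And>l1 l2 :: real^'n. l1 \<in> Lambda_set \<Longrightarrow> l2 \<in> Lambda_set \<Longrightarrow> dist l1 l2 \<le> D_Lam"
    \<comment> \<open>(A4) bounded variances\<close>
    and A4_w_grad: "\<And>i x \<xi>. x \<in> W \<Longrightarrow> GDERIV (\<lambda>y. loss i y \<xi>) x :> gl i x \<xi>"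
    and A4_w: "\<And>i x. x \<in> W \<Longrightarrow>
        (\<integral>\<^sup>+\<xi>. ennreal ((norm (gl i x \<xi> - gf i x))\<^sup>2) \<partial>P i) \<le> ennreal (sigma_w\<^sup>2)"
    and A4_lam: "\<And>x. x \<in> W \<Longrightarrow>
        (\<Sum>i\<in>UNIV. \<integral>\<^sup>+\<xi>. ennreal ((norm (tildeGradF loss i x \<xi> - gradF_lam f x))\<^sup>2) \<partial>P i)
          \<le> ennreal (real CARD('n) * sigma_lam\<^sup>2)"
    \<comment> \<open>parameters\<close>
    and \<tau>: "\<tau> \<ge> 1" and T: "T = S * \<tau>"
    and m: "1 \<le> m" "m \<le> CARD('n)"
    and \<gamma>: "\<gamma> > 0"
    \<comment> \<open>the DRDM iterates\<close>
    and w_in: "\<And>t \<omega>. \<omega> \<in> space M \<Longrightarrow> w t \<omega> \<in> W"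
    and w_meas: "\<And>t. w t \<in> borel_measurable M"
    and lam_meas: "\<And>s. lam s \<in> borel_measurable M"
    and lam0: "\<And>\<omega>. \<omega> \<in> space M \<Longrightarrow> lam 0 \<omega> \<in> Lambda_set"
    and lam_step: "\<And>s \<omega>. s < S \<Longrightarrow> \<omega> \<in> space M \<Longrightarrow>
        lam (Suc s) \<omega> = closest_point Lambda_set
          (lam s \<omega> + (real \<tau> * \<gamma>) *\<^sub>R dual_vec m loss (U s \<omega>) (w (tp s \<omega>) \<omega>) (\<lambda>i. \<zeta> s i \<omega>))"
    \<comment> \<open>the server's fresh samples in round s: their law, and independence from the history\<close>
    and sample_meas: "\<And>s. s < S \<Longrightarrow> dual_sample tp U \<zeta> s \<in> measurable M (sample_law P \<tau> m s)"
    and sample_law: "\<And>s. s < S \<Longrightarrow> distr M (sample_law P \<tau> m s) (dual_sample tp U \<zeta> s) = sample_law P \<tau> m s"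
    and sample_indep: "\<And>s. s < S \<Longrightarrow> prob_space.indep_set M
        (sigma_sets (space M) (history_events M P \<tau> m w lam tp U \<zeta> s))
        (sigma_sets (space M) (rv_events M (sample_law P \<tau> m s) (dual_sample tp U \<zeta> s)))"
    and l: "l \<in> Lambda_set"
  shows "(1 / real T) * (\<Sum>s<S. \<Sum>t\<in>{s*\<tau>+1..(s+1)*\<tau>}.
            (\<integral>\<omega>. Fobj f (w t \<omega>) l - Fobj f (w t \<omega>) (lam s \<omega>) \<partial>M))
         \<le> D_Lam\<^sup>2 / (2 * \<gamma> * real T) + \<gamma> * real \<tau> * G_lam\<^sup>2 / 2
            + \<gamma> * real \<tau> * sigma_lam\<^sup>2 / (2 * real m)"
proof -
  interpret drdm_dual M P loss f W G_lam sigma_lam \<gamma> S \<tau> m w lam tp U \<zeta> l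
    by (intro drdm_dual.intro drdm_dual_axioms.intro M) (fact assms)+
  show ?thesis
    using mean_round_gap_le[OF A3_Lam] unfolding T round_gap_def .
qed

end
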